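(* Assume (A1)–(A4), let $\{\lambda^k\}$ be generated by SLPMM with parameters $\sigma,\alpha>0$, and let $s>0$ be an integer. Then for all $k\ge0$, $$\mathbb E[\|\lambda^k\|]\le\psi(\sigma,\alpha,s),$$ and for every constant $0<\mu<1$, $$\Pr\big[\|\lambda^k\|\ge\phi(\sigma,\alpha,s,\mu)\big]\le\mu.$$
   Context: Let $\mathcal C\subset\mathbb R^n$ be a nonempty compact convex set. Let $\xi$ be a random vector whose distribution is supported on $\Xi\subseteq\mathbb R^q$, and let $F:\mathcal C\times\Xi\to\mathbb R$ and $G_i:\mathcal C\times\Xi\to\mathbb R$ ($i=1,\dots,p$) be such that $F(\cdot,\xi)$, $G_i(\cdot,\xi)$ are convex and continuous on $\mathcal C$ for every $\xi$, and $f(x):=\mathbb E[F(x,\xi)]$, $g_i(x):=\mathbb E[G_i(x,\xi)]$ are finite on $\mathcal C$. Write $G=(G_1,\dots,G_p)^T$. Stochastic subgradients: $v_0(x,\xi)\in\partial_xF(x,\xi)$, $v_i(x,\xi)\in\partial_xG_i(x,\xi)$. $[t]_+=\max\{t,0\}$, $[t]_+^2=(\max\{t,0\})^2$. SLPMM: fix $\sigma,\alpha>0$, $x^0\in\mathcal C$, $\lambda^0=0\in\mathbb R^p$, i.i.d. copies $\xi^0,\xi^1,\dots$ of $\xi$. For $k\ge0$, $x^{k+1}=\arg\min_{x\in\mathcal C}\{\mathcal L^k_\sigma(x,\lambda^k)+\frac{\alpha}{2}\|x-x^k\|^2\}$ with $\mathcal L^k_\sigma(x,\lambda):=F(x^k,\xi^k)+\langle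 v_0(x^k,\xi^k),x-x^k\rangle+\frac{1}{2\sigma}[\sum_{i=1}^p[\lambda_i+\sigma(G_i(x^k,\xi^k)+\langle v_i(x^k,\xi^k),x-x^k\rangle)]_+^2-\|\lambda\|^2]$, and $\lambda_i^{k+1}=[\lambda_i^k+\sigma(G_i(x^k,\xi^k)+\langle v_i(x^k,\xi^k),x^{k+1}-x^k\rangle)]_+$. Assumptions: (A1) $\|x'-x''\|\le R$ on $\mathcal C$. (A2) $\|G(x,\xi)\|\le\nu_g$ for all $x\in\mathcal C,\xi\in\Xi$. (A3) $\|v_0(x,\xi)\|\le\kappa_f$, $\|v_i(x,\xi)\|\le\kappa_g$ for all $x,\xi$. (A4) (Slater) there exist $\varepsilon_0>0$ and $\hat x\in\mathcal C$ with $g_i(\hat x)\le-\varepsilon_0$ for all $i$. Constants: $\beta_0:=\nu_g+\sqrt p\,\kappa_gR$, $\kappa_0:=\frac{2\kappa_fR}{\varepsilon_0}$, $\kappa_1:=\frac{R^2}{\varepsilon_0}$, $\kappa_2:=\frac{\nu_g^2}{\varepsilon_0}-\beta_0$, $\kappa_3:=2\beta_0+\frac{\varepsilon_0}{2}+\frac{8\beta_0^2}{\varepsilon_0}\log\frac{32\beta_0^2}{\varepsilon_0^2}$; $\psi(\sigma,\alpha,s):=\kappa_0+\kappa_1\frac{\alpha}{s}+\kappa_2\sigma+\kappa_3\sigma s$ and $\phi(\sigma,\alpha,s,\mu):=\psi(\sigma,\alpha,s)+\frac{8\beta_0^2}{\varepsilon_0}\log\big(\frac1\mu\big)\sigma s$.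 *)

theory Defs
  imports "HOL-Probability.Probability"
begin

definition subgrad_on :: "'n::euclidean_space set \<Rightarrow> ('n \<Rightarrow> real) \<Rightarrow> 'n \<Rightarrow> 'n \<Rightarrow> bool" where
  "subgrad_on C h x v \<longleftrightarrow> (\<forall>y\<in>C. h y \<ge> h x + inner v (y - x))"

definition slpmm_L ::
  "('n::euclidean_space \<Rightarrow> 'q \<Rightarrow> real) \<Rightarrow> ('n \<Rightarrow> 'q \<Rightarrow> real^'p) \<Rightarrow> ('n \<Rightarrow> 'q \<Rightarrow> 'n)
   \<Rightarrow> ('p \<Rightarrow> 'n \<Rightarrow> 'q \<Rightarrow> 'n) \<Rightarrow> real \<Rightarrow> 'n \<Rightarrow> 'q \<Rightarrow> 'n \<Rightarrow> real^'p \<Rightarrow> real" where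
  "slpmm_L F G v0 v \<sigma> xk z x lam =
     F xk z + inner (v0 xk z) (x - xk)
     + (1 / (2 * \<sigma>)) * ((\<Sum>i\<in>UNIV. (max 0 (lam $ i + \<sigma> * (G xk z $ i + inner (v i xk z) (x - xk))))\<^sup>2)
                         - (norm lam)\<^sup>2)"

text \<open>The proximal subproblem has a unique minimiser over C (strongly convex objective,
  C compact convex nonempty), selected here by SOME.\<close>
primrec slpmm ::
  "'n::euclidean_space set \<Rightarrow> ('n \<Rightarrow> 'q \<Rightarrow> real) \<Rightarrow> ('n \<Rightarrow> 'q \<Rightarrow> real^'p) \<Rightarrow> ('n \<Rightarrow> 'q \<Rightarrow> 'n)
   \<Rightarrow> ('p \<Rightarrow> 'n \<Rightarrow> 'q \<Rightarrow> 'n) \<Rightarrow> real \<Rightarrow> real \<Rightarrow> 'n \<Rightarrow> (nat \<Rightarrow> 'q) \<Rightarrow> nat \<Rightarrow> 'n \<times> (real^'p)" where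
  "slpmm C F G v0 v \<sigma> \<alpha> x0 smp 0 = (x0, 0)"
| "slpmm C F G v0 v \<sigma> \<alpha> x0 smp (Suc k) =
     (let xk = fst (slpmm C F G v0 v \<sigma> \<alpha> x0 smp k);
          lk = snd (slpmm C F G v0 v \<sigma> \<alpha> x0 smp k);
          z = smp k;
          Phi = (\<lambda>x. slpmm_L F G v0 v \<sigma> xk z x lk + (\<alpha> / 2) * (norm (x - xk))\<^sup>2);
          xn = (SOME y. y \<in> C \<and> (\<forall>w\<in>C. Phi y \<le> Phi w));
          ln = (\<chi> i. max 0 (lk $ i + \<sigma> * (G xk z $ i + inner (v i xk z) (xn - xk))))
      in (xn, ln))"

definition beta0 :: "real \<Rightarrow> real \<Rightarrow> real \<Rightarrow> nat \<Rightarrow> real" where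
  "beta0 \<nu>g \<kappa>g R p = \<nu>g + sqrt (real p) * \<kappa>g * R"

definition psi_bd :: "real \<Rightarrow> real \<Rightarrow> real \<Rightarrow> real \<Rightarrow> real \<Rightarrow> nat \<Rightarrow> real \<Rightarrow> real \<Rightarrow> real \<Rightarrow> real" where
  "psi_bd \<nu>g \<kappa>f \<kappa>g R \<epsilon>0 p \<sigma> \<alpha> s =
    (let b = beta0 \<nu>g \<kappa>g R p;
         k0 = 2 * \<kappa>f * R / \<epsilon>0;
         k1 = R\<^sup>2 / \<epsilon>0;
         k2 = \<nu>g\<^sup>2 / \<epsilon>0 - b;
         k3 = 2 * b + \<epsilon>0 / 2 + (8 * b\<^sup>2 / \<epsilon>0) * ln (32 * b\<^sup>2 / \<epsilon>0\<^sup>2)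
     in k0 + k1 * \<alpha> / s + k2 * \<sigma> + k3 * \<sigma> * s)"

definition phi_bd :: "real \<Rightarrow> real \<Rightarrow> real \<Rightarrow> real \<Rightarrow> real \<Rightarrow> nat \<Rightarrow> real \<Rightarrow> real \<Rightarrow> real \<Rightarrow> real \<Rightarrow> real" where
  "phi_bd \<nu>g \<kappa>f \<kappa>g R \<epsilon>0 p \<sigma> \<alpha> s \<mu> =
     psi_bd \<nu>g \<kappa>f \<kappa>g R \<epsilon>0 p \<sigma> \<alpha> s
     + (8 * (beta0 \<nu>g \<kappa>g R p)\<^sup>2 / \<epsilon>0) * ln (1 / \<mu>) * \<sigma> * s"

end

theory Submission
  imports Defs
begin

text \<open>The multipliers are controlled through the Lyapunov function
  \<open>\<parallel>\<lambda>\<parallel>\<^sup>2 + \<alpha>\<sigma>\<parallel>xhat - x\<parallel>\<^sup>2\<close>. Testing the strongly convex proximal subproblem at the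
  Slater point \<open>xhat\<close> shows that one SLPMM step raises it by at most
  \<open>2\<sigma>\<langle>\<lambda>, G(xhat, \<xi>)\<rangle> + \<sigma>\<^sup>2\<nu>\<^sub>g\<^sup>2 + 2\<sigma>\<kappa>\<^sub>fR\<close>; since \<open>\<xi>\<close> is independent of
  \<open>\<lambda>\<close>, the Slater condition makes the middle term at most \<open>-2\<sigma>\<epsilon>\<^sub>0\<parallel>\<lambda>\<parallel>\<close> in expectation.
  Summed over a block of \<open>s\<close> steps, during which \<open>\<parallel>\<lambda>\<parallel>\<close> moves by at most \<open>\<sigma>\<beta>\<^sub>0\<close> per
  step, this gives a drift of \<open>-s\<sigma>\<epsilon>\<^sub>0/2\<close> for \<open>\<parallel>\<lambda>\<parallel>\<close> above a threshold. Bounded increments and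
  negative drift turn, as in Hajek's argument, into a contraction of the exponential moment
  \<open>E exp(r\<parallel>\<lambda>\<^sup>k\<parallel>)\<close> from one block to the next; the Markov property of the iteration makes
  this a recursion whose fixed point bounds all moments, and Jensen's and Markov's inequalities
  convert that bound into the bounds on the mean and the tail.\<close>

lemma power2_max_0_convex_comb:
  fixes a b t :: real
  assumes "0 \<le> t" "t \<le> 1"
  shows "(max 0 ((1 - t) * a + t * b))\<^sup>2 \<le> (1 - t) * (max 0 a)\<^sup>2 + t * (max 0 b)\<^sup>2"
proof -
  have "(1 - t) * a \<le> (1 - t) * max 0 a" "t * b \<le> t * max 0 b"
    "0 \<le> (1 - t) * max 0 a" "0 \<le> t * max 0 b"
    using assms by (auto intro!: mult_left_mono)
  then have "max 0 ((1 - t) * a + t * b) \<le> (1 - t) * max 0 a + t * max 0 b"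
    by simp
  then have "(max 0 ((1 - t) * a + t * b))\<^sup>2 \<le> ((1 - t) * max 0 a + t * max 0 b)\<^sup>2"
    by (intro power_mono) auto
  also have "\<dots> = (1 - t) * (max 0 a)\<^sup>2 + t * (max 0 b)\<^sup>2 - t * (1 - t) * (max 0 a - max 0 b)\<^sup>2"
    by (simp add: power2_eq_square algebra_simps)
  also have "\<dots> \<le> (1 - t) * (max 0 a)\<^sup>2 + t * (max 0 b)\<^sup>2"
    using assms by simp
  finally show ?thesis .
qed

lemma power2_norm_convex_comb:
  fixes u w :: "'a::real_inner"
  shows "(norm ((1 - t) *\<^sub>R u + t *\<^sub>R w))\<^sup>2
           = (1 - t) * (norm u)\<^sup>2 + t * (norm w)\<^sup>2 - t * (1 - t) * (norm (u - w))\<^sup>2"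
  by (simp add: power2_norm_eq_inner inner_add_left inner_add_right inner_diff_left inner_diff_right
      inner_commute algebra_simps)

lemma power2_norm_vec_eq_sum: "(norm (x::real^'p))\<^sup>2 = (\<Sum>i\<in>UNIV. (x $ i)\<^sup>2)"
  unfolding power2_norm_eq_inner inner_vec_def by (simp add: power2_eq_square)

lemma norm_vec_le_sqrt_card:
  fixes x :: "real^'p"
  assumes "\<And>i. \<bar>x $ i\<bar> \<le> c"
  shows "norm x \<le> sqrt (real CARD('p)) * c"
proof -
  have c: "0 \<le> c" using assms[of undefined] by linarith
  have "(norm x)\<^sup>2 \<le> (\<Sum>i\<in>(UNIV::'p set). c\<^sup>2)"
    unfolding power2_norm_vec_eq_sum
    by (intro sum_mono) (metis abs_le_square_iff abs_of_nonneg assms c power2_abs)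
  also have "\<dots> = (sqrt (real CARD('p)) * c)\<^sup>2" by (simp add: power_mult_distrib)
  finally show ?thesis
    by (rule power2_le_imp_le) (use c in simp)
qed

lemma exp_le_quadratic:
  fixes x :: real
  assumes "\<bar>x\<bar> \<le> 1"
  shows "exp x \<le> 1 + x + x\<^sup>2"
proof (cases "0 \<le> x")
  case True
  then show ?thesis using exp_bound[of x] assms by simp
next
  case False
  define u where "u = - x"
  have u: "0 < u" "u \<le> 1" using False assms by (auto simp: u_def)
  have "1 \<le> (1 + u + u\<^sup>2 / 2) * (1 - u + u\<^sup>2)"
  proof -
    have "(1 + u + u\<^sup>2 / 2) * (1 - u + u\<^sup>2) = 1 + u\<^sup>2 / 2 + u ^ 3 / 2 + u ^ 4 / 2"
      by (simp add: power2_eq_square power3_eq_cube power4_eq_xxxx field_simps)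
    then show ?thesis using u by simp
  qed
  also have "\<dots> \<le> exp u * (1 - u + u\<^sup>2)"
  proof (rule mult_right_mono)
    show "1 + u + u\<^sup>2 / 2 \<le> exp u" using exp_lower_Taylor_quadratic[of u] u by simp
    show "0 \<le> 1 - u + u\<^sup>2" using u by simp
  qed
  finally have "inverse (exp u) \<le> 1 - u + u\<^sup>2"
    by (simp add: field_simps)
  then show ?thesis by (simp add: u_def exp_minus)
qed

lemma shifted_recurrence_bound:
  fixes a :: "nat \<Rightarrow> 'a::ordered_semiring"
  assumes "0 < s" "0 \<le> \<rho>"
    and step: "\<And>k. a (k + s) \<le> \<rho> * a k + c"
    and start: "\<And>k. k < s \<Longrightarrow> a k \<le> K"
    and fixpoint: "\<rho> * K + c \<le> K"
  shows "a k \<le> K"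
proof (induction k rule: less_induct)
  case (less k)
  show ?case
  proof (cases "k < s")
    case False
    then obtain k' where k: "k = k' + s" by (metis add.commute le_Suc_ex not_less)
    have "a k \<le> \<rho> * a k' + c" unfolding k by (rule step)
    also have "\<dots> \<le> \<rho> * K + c"
      using less.IH[of k'] k \<open>0 < s\<close> \<open>0 \<le> \<rho>\<close> by (intro add_right_mono mult_left_mono) auto
    finally show ?thesis using fixpoint by (rule order_trans)
  qed (rule start)
qed

text \<open>For \<open>Z0 = \<parallel>\<lambda>\<parallel>\<close>, the left-hand side below is the bound on the expected Lyapunov function
  after \<open>S\<close> steps; above the threshold it is at most \<open>(Z0 - S\<sigma>\<epsilon>/2)\<^sup>2\<close>, a drift of \<open>-S\<sigma>\<epsilon>/2\<close>.\<close>

lemma drift_threshold_algebra: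
  fixes Z0 S \<sigma> \<epsilon> \<alpha> R b \<nu> \<kappa> :: real
  assumes "1 \<le> S" "0 < \<sigma>" "0 < \<epsilon>" "0 < \<alpha>" "0 \<le> R" "0 \<le> \<kappa>" "0 \<le> b"
    and Z0: "2 * \<kappa> * R / \<epsilon> + R\<^sup>2 * \<alpha> / (\<epsilon> * S) + (\<nu>\<^sup>2 / \<epsilon> - b) * \<sigma> + (b + \<epsilon> / 2) * \<sigma> * S \<le> Z0"
  shows "Z0\<^sup>2 + \<alpha> * \<sigma> * R\<^sup>2 - 2 * \<sigma> * \<epsilon> * (S * Z0 - \<sigma> * b * (S * (S - 1) / 2))
           + S * (\<sigma>\<^sup>2 * \<nu>\<^sup>2 + 2 * \<sigma> * \<kappa> * R) \<le> (Z0 - S * \<sigma> * \<epsilon> / 2)\<^sup>2"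
    and "0 \<le> Z0 - S * \<sigma> * \<epsilon> / 2"
proof -
  define \<theta> where "\<theta> = 2 * \<kappa> * R / \<epsilon> + R\<^sup>2 * \<alpha> / (\<epsilon> * S) + (\<nu>\<^sup>2 / \<epsilon> - b) * \<sigma> + (b + \<epsilon> / 2) * \<sigma> * S"
  have K: "0 < S * \<sigma> * \<epsilon>" using assms by simp
  have "S * \<sigma> * \<epsilon> * \<theta> \<le> S * \<sigma> * \<epsilon> * Z0" using Z0 K unfolding \<theta>_def by (intro mult_left_mono) auto
  moreover have "S * \<sigma> * \<epsilon> * \<theta> = 2 * S * \<sigma> * \<kappa> * R + \<alpha> * \<sigma> * R\<^sup>2 + S * \<sigma>\<^sup>2 * \<nu>\<^sup>2 - \<sigma>\<^sup>2 * \<epsilon> * b * S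
      + \<sigma>\<^sup>2 * \<epsilon> * b * S\<^sup>2 + S\<^sup>2 * \<sigma>\<^sup>2 * \<epsilon>\<^sup>2 / 2"
    unfolding \<theta>_def using assms by (simp add: field_simps power2_eq_square)
  moreover have "(Z0 - S * \<sigma> * \<epsilon> / 2)\<^sup>2 - (Z0\<^sup>2 + \<alpha> * \<sigma> * R\<^sup>2 - 2 * \<sigma> * \<epsilon> * (S * Z0 - \<sigma> * b * (S * (S - 1) / 2))
        + S * (\<sigma>\<^sup>2 * \<nu>\<^sup>2 + 2 * \<sigma> * \<kappa> * R))
      = S * \<sigma> * \<epsilon> * Z0 + S\<^sup>2 * \<sigma>\<^sup>2 * \<epsilon>\<^sup>2 / 4 - \<alpha> * \<sigma> * R\<^sup>2 - \<sigma>\<^sup>2 * \<epsilon> * b * S\<^sup>2 + \<sigma>\<^sup>2 * \<epsilon> * b * S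
        - S * \<sigma>\<^sup>2 * \<nu>\<^sup>2 - 2 * S * \<sigma> * \<kappa> * R"
    by (simp add: power2_eq_square field_simps)
  moreover have "0 \<le> S\<^sup>2 * \<sigma>\<^sup>2 * \<epsilon>\<^sup>2" by simp
  ultimately show "Z0\<^sup>2 + \<alpha> * \<sigma> * R\<^sup>2 - 2 * \<sigma> * \<epsilon> * (S * Z0 - \<sigma> * b * (S * (S - 1) / 2))
      + S * (\<sigma>\<^sup>2 * \<nu>\<^sup>2 + 2 * \<sigma> * \<kappa> * R) \<le> (Z0 - S * \<sigma> * \<epsilon> / 2)\<^sup>2"
    by linarith
  have "\<theta> = 2 * \<kappa> * R / \<epsilon> + R\<^sup>2 * \<alpha> / (\<epsilon> * S) + \<nu>\<^sup>2 / \<epsilon> * \<sigma> + b * \<sigma> * (S - 1) + S * \<sigma> * \<epsilon> / 2"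
    unfolding \<theta>_def by (simp add: field_simps)
  moreover have "0 \<le> 2 * \<kappa> * R / \<epsilon> + R\<^sup>2 * \<alpha> / (\<epsilon> * S) + \<nu>\<^sup>2 / \<epsilon> * \<sigma> + b * \<sigma> * (S - 1)"
    using assms by (intro add_nonneg_nonneg) auto
  ultimately show "0 \<le> Z0 - S * \<sigma> * \<epsilon> / 2" using Z0 unfolding \<theta>_def by linarith
qed

section \<open>Exponential moments\<close>

lemma (in prob_space) exp_moment_mean_tail:
  fixes Z :: "'a \<Rightarrow> real"
  assumes Z: "integrable M Z" and expZ: "integrable M (\<lambda>\<omega>. exp (r * Z \<omega>))"
    and r: "0 < r" and K: "expectation (\<lambda>\<omega>. exp (r * Z \<omega>)) \<le> K"
  shows "expectation Z \<le> ln K / r"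
    and "0 < \<mu> \<Longrightarrow> prob {\<omega> \<in> space M. (ln K + ln (1 / \<mu>)) / r \<le> Z \<omega>} \<le> \<mu>"
proof -
  have jensen: "exp (r * expectation Z) \<le> K"
    using jensens_inequality[OF Z, where I=UNIV and q="\<lambda>x. exp (r * x)"] convex_on_exp[of r] expZ r K
    by auto
  then have K_pos: "0 < K" using exp_gt_zero order.strict_trans2 by blast
  show "expectation Z \<le> ln K / r"
    using jensen r K_pos by (simp add: pos_le_divide_eq mult.commute ln_ge_iff)
  assume \<mu>: "0 < \<mu>"
  define t where "t = (ln K + ln (1 / \<mu>)) / r"
  have exp_rt: "exp (r * t) = K / \<mu>"
    using r K_pos \<mu> by (simp add: t_def ln_div exp_diff)
  have [measurable]: "Z \<in> borel_measurable M" using Z by auto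
  have "{\<omega> \<in> space M. t \<le> Z \<omega>} = {\<omega> \<in> space M. exp (r * t) \<le> exp (r * Z \<omega>)}"
    using r by simp
  moreover have "prob {\<omega> \<in> space M. exp (r * t) \<le> exp (r * Z \<omega>)}
      \<le> expectation (\<lambda>\<omega>. exp (r * Z \<omega>)) / exp (r * t)"
    using expZ by (intro integral_Markov_inequality_measure[where A="space M"]) auto
  ultimately have "prob {\<omega> \<in> space M. t \<le> Z \<omega>} \<le> expectation (\<lambda>\<omega>. exp (r * Z \<omega>)) / exp (r * t)"
    by simp
  also have "\<dots> \<le> K / exp (r * t)" using K by (simp add: divide_right_mono)
  also have "\<dots> = \<mu>" using K_pos \<mu> by (simp add: exp_rt)
  finally show "prob {\<omega> \<in> space M. (ln K + ln (1 / \<mu>)) / r \<le> Z \<omega>} \<le> \<mu>" unfolding t_def .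
qed

lemma (in prob_space) nn_integral_exp_le_quadratic:
  fixes Z :: "'a \<Rightarrow> real"
  assumes Z: "integrable M Z" and d: "d \<le> 1"
    and AE: "AE \<omega> in M. \<bar>r * (Z \<omega> - z)\<bar> \<le> d"
  shows "(\<integral>\<^sup>+\<omega>. ennreal (exp (r * Z \<omega>)) \<partial>M) \<le> ennreal (exp (r * z) * (1 + r * (expectation Z - z) + d\<^sup>2))"
proof -
  define g where "g = (\<lambda>\<omega>. exp (r * z) * (1 + r * (Z \<omega> - z) + d\<^sup>2))"
  have AE_g: "AE \<omega> in M. exp (r * Z \<omega>) \<le> g \<omega> \<and> 0 \<le> g \<omega>"
    using AE
  proof eventually_elim
    case (elim \<omega>)
    define D where "D = r * (Z \<omega> - z)"
    have D: "\<bar>D\<bar> \<le> d" using elim by (simp add: D_def)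
    then have D2: "D\<^sup>2 \<le> d\<^sup>2" by (metis abs_ge_zero power2_abs power_mono)
    have "exp (r * Z \<omega>) = exp (r * z) * exp D" by (simp add: D_def exp_add[symmetric] algebra_simps)
    also have "\<dots> \<le> exp (r * z) * (1 + D + D\<^sup>2)" using D d by (intro mult_left_mono exp_le_quadratic) auto
    also have "\<dots> \<le> g \<omega>" using D2 by (simp add: g_def D_def)
    finally have "exp (r * Z \<omega>) \<le> g \<omega>" .
    moreover have "0 \<le> 1 + D + d\<^sup>2" using D d zero_le_power2[of d] unfolding abs_le_iff by linarith
    ultimately show ?case by (simp add: g_def D_def)
  qed
  have "integrable M g" unfolding g_def using Z by simp
  have "(\<integral>\<^sup>+\<omega>. ennreal (exp (r * Z \<omega>)) \<partial>M) \<le> (\<integral>\<^sup>+\<omega>. ennreal (g \<omega>) \<partial>M)"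
    using AE_g by (intro nn_integral_mono_AE) (auto elim!: eventually_mono intro: ennreal_leI)
  also have "\<dots> = ennreal (expectation g)"
    using AE_g by (intro nn_integral_eq_integral \<open>integrable M g\<close>) (auto elim!: eventually_mono)
  also have "expectation g = exp (r * z) * (1 + r * (expectation Z - z) + d\<^sup>2)"
    unfolding g_def using Z by (simp add: prob_space algebra_simps)
  finally show ?thesis .
qed

section \<open>Minimisers of strongly convex functions\<close>

definition strongly_convex_on :: "'a::real_inner set \<Rightarrow> real \<Rightarrow> ('a \<Rightarrow> real) \<Rightarrow> bool" where
  "strongly_convex_on C \<alpha> f \<longleftrightarrow>
     (\<forall>x\<in>C. \<forall>y\<in>C. \<forall>t. 0 \<le> t \<and> t \<le> 1 \<longrightarrow>
        f ((1 - t) *\<^sub>R x + t *\<^sub>R y) \<le> (1 - t) * f x + t * f y - (\<alpha> / 2) * (t * (1 - t)) * (norm (x - y))\<^sup>2)"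

lemma strongly_convex_on_min_growth:
  assumes f: "strongly_convex_on C \<alpha> f" and "convex C"
    and y: "y \<in> C" "\<And>u. u \<in> C \<Longrightarrow> f y \<le> f u" and w: "w \<in> C"
  shows "f y + (\<alpha> / 2) * (norm (y - w))\<^sup>2 \<le> f w"
proof -
  define d where "d = (\<alpha> / 2) * (norm (y - w))\<^sup>2"
  have "f y + (1 - t) * d \<le> f w" if t: "0 < t" "t < 1" for t
  proof -
    have "(1 - t) *\<^sub>R y + t *\<^sub>R w \<in> C"
      using t by (intro convexD[OF \<open>convex C\<close> y(1) w]) auto
    then have "f y \<le> f ((1 - t) *\<^sub>R y + t *\<^sub>R w)" by (rule y(2))
    also have "\<dots> \<le> (1 - t) * f y + t * f w - (\<alpha> / 2) * (t * (1 - t)) * (norm (y - w))\<^sup>2"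
      using f y(1) w t unfolding strongly_convex_on_def by simp
    also have "\<dots> = (1 - t) * f y + t * f w - t * ((1 - t) * d)"
      by (simp add: d_def algebra_simps)
    finally have "t * (f y + (1 - t) * d) \<le> t * f w" by (simp add: algebra_simps)
    then show ?thesis using t by simp
  qed
  then have "\<forall>\<^sub>F t in at_right 0. f y + (1 - t) * d \<le> f w"
    using eventually_at_right_real[of 0 1] by (auto elim: eventually_mono)
  moreover have "((\<lambda>t. f y + (1 - t) * d) \<longlongrightarrow> f y + (1 - 0) * d) (at_right 0)"
    by (intro tendsto_intros)
  ultimately show ?thesis
    unfolding d_def[symmetric] by (intro tendsto_upperbound) auto
qed

lemma strongly_convex_on_argmin_unique:
  assumes "strongly_convex_on C \<alpha> f" "convex C" "0 < \<alpha>"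
    and "y1 \<in> C" "\<And>u. u \<in> C \<Longrightarrow> f y1 \<le> f u"
    and "y2 \<in> C" "\<And>u. u \<in> C \<Longrightarrow> f y2 \<le> f u"
  shows "y1 = y2"
proof -
  have "f y1 + (\<alpha> / 2) * (norm (y1 - y2))\<^sup>2 \<le> f y2"
    using strongly_convex_on_min_growth assms by blast
  moreover have "f y2 \<le> f y1" using assms by blast
  ultimately have "(\<alpha> / 2) * (norm (y1 - y2))\<^sup>2 \<le> 0" by linarith
  then show ?thesis using \<open>0 < \<alpha>\<close> by (simp add: mult_le_0_iff)
qed

text \<open>A unique minimiser over a compact set depends continuously on the parameters of a jointly
  continuous objective, because the graph of the minimiser map is closed.\<close>

lemma continuous_on_unique_argmin:
  fixes P :: "'a::euclidean_space \<Rightarrow> 'b::euclidean_space \<Rightarrow> real"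
  assumes K: "compact K" "K \<noteq> {}"
    and P: "continuous_on UNIV (\<lambda>p. P (fst p) (snd p))"
    and unique: "\<And>\<theta> y1 y2. y1 \<in> K \<Longrightarrow> (\<forall>u\<in>K. P \<theta> y1 \<le> P \<theta> u)
                   \<Longrightarrow> y2 \<in> K \<Longrightarrow> (\<forall>u\<in>K. P \<theta> y2 \<le> P \<theta> u) \<Longrightarrow> y1 = y2"
  defines "m \<equiv> \<lambda>\<theta>. SOME y. y \<in> K \<and> (\<forall>u\<in>K. P \<theta> y \<le> P \<theta> u)"
  shows "\<And>\<theta>. m \<theta> \<in> K" and "\<And>\<theta> u. u \<in> K \<Longrightarrow> P \<theta> (m \<theta>) \<le> P \<theta> u"
    and "continuous_on UNIV m"
proof -
  have ex: "\<exists>y. y \<in> K \<and> (\<forall>u\<in>K. P \<theta> y \<le> P \<theta> u)" for \<theta>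
  proof -
    have "continuous_on K (\<lambda>y. P (fst (\<theta>, y)) (snd (\<theta>, y)))"
      by (rule continuous_on_compose2[OF P]) (auto intro: continuous_intros)
    from continuous_attains_inf[OF K this] show ?thesis by auto
  qed
  show m_in: "m \<theta> \<in> K" and m_min: "u \<in> K \<Longrightarrow> P \<theta> (m \<theta>) \<le> P \<theta> u" for \<theta> u
    using someI_ex[OF ex[of \<theta>]] unfolding m_def by auto
  have graph: "(\<lambda>\<theta>. (\<theta>, m \<theta>)) ` UNIV = (UNIV \<times> K) \<inter> (\<Inter>u\<in>K. {p. P (fst p) (snd p) \<le> P (fst p) u})"
  proof (intro set_eqI iffI)
    fix p assume "p \<in> (UNIV \<times> K) \<inter> (\<Inter>u\<in>K. {p. P (fst p) (snd p) \<le> P (fst p) u})"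
    then have "snd p = m (fst p)"
      using unique[of "snd p" "fst p" "m (fst p)"] m_in m_min by auto
    then show "p \<in> (\<lambda>\<theta>. (\<theta>, m \<theta>)) ` UNIV" by (metis prod.collapse rangeI)
  qed (use m_in m_min in auto)
  have "continuous_on UNIV (\<lambda>p::'a \<times> 'b. P (fst p) u)" for u
  proof -
    have "continuous_on UNIV (\<lambda>p::'a \<times> 'b. (fst p, u))" by (intro continuous_intros)
    from continuous_on_compose2[OF P this] show ?thesis by simp
  qed
  then have "closed ((\<lambda>\<theta>. (\<theta>, m \<theta>)) ` UNIV)"
    unfolding graph using K P
    by (intro closed_Int closed_Times closed_INT closed_UNIV compact_imp_closed ballI closed_Collect_le)
  then show "continuous_on UNIV m"
    using m_in by (intro continuous_from_closed_graph[OF K(1)]) auto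
qed

section \<open>Iterations driven by independent samples\<close>

primrec run_chain :: "('s \<Rightarrow> 'q \<Rightarrow> 's) \<Rightarrow> 's \<Rightarrow> nat \<Rightarrow> nat \<Rightarrow> (nat \<Rightarrow> 'q) \<Rightarrow> 's" where
  "run_chain T y m 0 f = y"
| "run_chain T y m (Suc j) f = T (run_chain T y m j f) (f (m + j))"

lemma run_chain_add: "run_chain T y m (j1 + j2) f = run_chain T (run_chain T y m j1 f) (m + j1) j2 f"
  by (induction j2) (simp_all add: add.assoc)

lemma run_chain_cong:
  "(\<And>i. m \<le> i \<Longrightarrow> i < m + j \<Longrightarrow> f i = g i) \<Longrightarrow> run_chain T y m j f = run_chain T y m j g"
  by (induction j) auto

lemma measurable_run_chain:
  fixes T :: "'s::second_countable_topology \<Rightarrow> 'q::second_countable_topology \<Rightarrow> 's"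
  assumes T: "(\<lambda>p. T (fst p) (snd p)) \<in> borel_measurable borel"
    and Y: "Y \<in> borel_measurable N"
    and W: "\<And>i. i < j \<Longrightarrow> (\<lambda>x. W x (m + i)) \<in> borel_measurable N"
  shows "(\<lambda>x. run_chain T (Y x) m j (W x)) \<in> borel_measurable N"
  using W
proof (induction j)
  case (Suc j)
  then have "(\<lambda>x. (run_chain T (Y x) m j (W x), W x (m + j))) \<in> borel_measurable N"
    by (intro borel_measurable_Pair) auto
  from measurable_compose[OF this T] show ?case by simp
qed (simp add: Y)

lemma measurable_run_chain_PiM:
  fixes T :: "'s::second_countable_topology \<Rightarrow> 'q::second_countable_topology \<Rightarrow> 's"
  assumes T: "(\<lambda>p. T (fst p) (snd p)) \<in> borel_measurable borel" and "{m..<m + j} \<subseteq> I"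
  shows "(\<lambda>u. run_chain T y m j u) \<in> borel_measurable (PiM I (\<lambda>_. borel))"
proof -
  have "(\<lambda>u. u (m + i)) \<in> measurable (PiM I (\<lambda>_. borel)) borel" if "i < j" for i
    using assms(2) that by (intro measurable_component_singleton) auto
  from measurable_run_chain[where W="\<lambda>u. u" and m=m and j=j, OF T measurable_const[of y] this]
  show ?thesis by simp
qed

context prob_space
begin

lemma indep_var_run_chain_sample:
  fixes T :: "'s::second_countable_topology \<Rightarrow> 'q::second_countable_topology \<Rightarrow> 's"
    and Xi :: "nat \<Rightarrow> 'a \<Rightarrow> 'q" and g :: "'s \<Rightarrow> 'b::topological_space" and f :: "'q \<Rightarrow> 'b"
  assumes indep: "indep_vars (\<lambda>_. borel) Xi UNIV"
    and T: "(\<lambda>p. T (fst p) (snd p)) \<in> borel_measurable borel"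
    and g: "g \<in> borel_measurable borel" and f: "f \<in> borel_measurable borel"
  shows "indep_var borel (\<lambda>\<omega>. g (run_chain T y m j (\<lambda>i. Xi i \<omega>))) borel (\<lambda>\<omega>. f (Xi (m + j) \<omega>))"
proof -
  have "indep_var (PiM {m..<m + j} (\<lambda>_. borel)) (\<lambda>\<omega>. restrict (\<lambda>i. Xi i \<omega>) {m..<m + j})
      (PiM {m + j} (\<lambda>_. borel)) (\<lambda>\<omega>. restrict (\<lambda>i. Xi i \<omega>) {m + j})"
    by (rule indep_var_restrict[OF indep]) auto
  then have "indep_var borel ((\<lambda>u. g (run_chain T y m j u)) \<circ> (\<lambda>\<omega>. restrict (\<lambda>i. Xi i \<omega>) {m..<m + j}))
      borel ((\<lambda>u. f (u (m + j))) \<circ> (\<lambda>\<omega>. restrict (\<lambda>i. Xi i \<omega>) {m + j}))"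
  proof (rule indep_var_compose)
    show "(\<lambda>u. g (run_chain T y m j u)) \<in> borel_measurable (PiM {m..<m + j} (\<lambda>_. borel))"
      by (rule measurable_compose[OF measurable_run_chain_PiM[OF T] g]) simp
    have "(\<lambda>u. u (m + j)) \<in> measurable (PiM {m + j} (\<lambda>_. borel)) borel"
      by (rule measurable_component_singleton) simp
    from measurable_compose[OF this f]
    show "(\<lambda>u. f (u (m + j))) \<in> borel_measurable (PiM {m + j} (\<lambda>_. borel))" .
  qed
  moreover have "(\<lambda>u. g (run_chain T y m j u)) \<circ> (\<lambda>\<omega>. restrict (\<lambda>i. Xi i \<omega>) {m..<m + j})
      = (\<lambda>\<omega>. g (run_chain T y m j (\<lambda>i. Xi i \<omega>)))"
    by (rule ext) (auto simp: comp_def intro!: arg_cong[where f=g] run_chain_cong)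
  ultimately show ?thesis by (simp add: comp_def)
qed

lemma nn_integral_indep_var_Pair:
  assumes UW: "indep_var PA U PB W" and H: "H \<in> borel_measurable (PA \<Otimes>\<^sub>M PB)"
  shows "(\<integral>\<^sup>+\<omega>. H (U \<omega>, W \<omega>) \<partial>M) = (\<integral>\<^sup>+u. (\<integral>\<^sup>+\<omega>. H (u, W \<omega>) \<partial>M) \<partial>distr M PA U)"
proof -
  from UW have U: "U \<in> measurable M PA" and W: "W \<in> measurable M PB"
    and UW_distr: "distr M PA U \<Otimes>\<^sub>M distr M PB W = distr M (PA \<Otimes>\<^sub>M PB) (\<lambda>\<omega>. (U \<omega>, W \<omega>))"
    using indep_var_distribution_eq by auto
  have "(\<integral>\<^sup>+\<omega>. H (U \<omega>, W \<omega>) \<partial>M) = (\<integral>\<^sup>+p. H p \<partial>(distr M PA U \<Otimes>\<^sub>M distr M PB W))"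
    unfolding UW_distr using H by (simp add: nn_integral_distr measurable_Pair[OF U W])
  also have "\<dots> = (\<integral>\<^sup>+u. \<integral>\<^sup>+w. H (u, w) \<partial>distr M PB W \<partial>distr M PA U)"
  proof (rule sigma_finite_measure.nn_integral_fst[symmetric])
    show "sigma_finite_measure (distr M PB W)"
      by (intro prob_space_imp_sigma_finite prob_space_distr W)
    have "sets (distr M PA U \<Otimes>\<^sub>M distr M PB W) = sets (PA \<Otimes>\<^sub>M PB)"
      by (rule sets_pair_measure_cong) simp_all
    then show "H \<in> borel_measurable (distr M PA U \<Otimes>\<^sub>M distr M PB W)"
      using H measurable_cong_sets by blast
  qed
  also have "\<dots> = (\<integral>\<^sup>+u. (\<integral>\<^sup>+\<omega>. H (u, W \<omega>) \<partial>M) \<partial>distr M PA U)"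
  proof (rule nn_integral_cong)
    fix u assume "u \<in> space (distr M PA U)"
    then have "(\<lambda>w. H (u, w)) \<in> borel_measurable PB" by (intro measurable_Pair2[OF H]) simp
    then show "(\<integral>\<^sup>+w. H (u, w) \<partial>distr M PB W) = (\<integral>\<^sup>+\<omega>. H (u, W \<omega>) \<partial>M)"
      by (simp add: nn_integral_distr[OF W])
  qed
  finally show ?thesis .
qed

text \<open>Markov property of the chain: the last \<open>s\<close> of \<open>k + s\<close> transitions use samples independent of
  the state after \<open>k\<close> transitions, so a bound on \<open>s\<close>-step expectations from every state that is
  reachable in \<open>k\<close> steps can be integrated against the law of that state.\<close>

lemma nn_integral_run_chain_split:
  fixes T :: "'s::second_countable_topology \<Rightarrow> 'q::second_countable_topology \<Rightarrow> 's"
    and Xi :: "nat \<Rightarrow> 'a \<Rightarrow> 'q" and h B :: "'s \<Rightarrow> ennreal"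
  assumes indep: "indep_vars (\<lambda>_. borel) Xi UNIV"
    and T: "(\<lambda>p. T (fst p) (snd p)) \<in> borel_measurable borel"
    and h: "h \<in> borel_measurable borel" and B: "B \<in> borel_measurable borel"
    and bound: "\<And>u. (\<integral>\<^sup>+\<omega>. h (run_chain T (run_chain T y 0 k u) k s (\<lambda>i. Xi i \<omega>)) \<partial>M)
                      \<le> B (run_chain T y 0 k u)"
  shows "(\<integral>\<^sup>+\<omega>. h (run_chain T y 0 (k + s) (\<lambda>i. Xi i \<omega>)) \<partial>M)
           \<le> (\<integral>\<^sup>+\<omega>. B (run_chain T y 0 k (\<lambda>i. Xi i \<omega>)) \<partial>M)"
proof -
  define PA where "PA = PiM {..<k} (\<lambda>_. borel :: 'q measure)"
  define PB where "PB = PiM {k..<k + s} (\<lambda>_. borel :: 'q measure)"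
  define U where "U = (\<lambda>\<omega>. restrict (\<lambda>i. Xi i \<omega>) {..<k})"
  define W where "W = (\<lambda>\<omega>. restrict (\<lambda>i. Xi i \<omega>) {k..<k + s})"
  have UW: "indep_var PA U PB W"
    unfolding PA_def PB_def U_def W_def by (rule indep_var_restrict[OF indep]) auto
  then have U: "U \<in> measurable M PA" using indep_var_distribution_eq by auto
  have run_k: "(\<lambda>u. run_chain T y 0 k u) \<in> borel_measurable PA"
    unfolding PA_def by (rule measurable_run_chain_PiM[OF T]) auto
  have "(\<lambda>p. snd p (k + i)) \<in> borel_measurable (PA \<Otimes>\<^sub>M PB)" if "i < s" for i
    using measurable_compose[OF measurable_snd measurable_component_singleton[of "k + i"]] that
    by (simp add: PB_def)
  then have "(\<lambda>p. run_chain T (run_chain T y 0 k (fst p)) k s (snd p)) \<in> borel_measurable (PA \<Otimes>\<^sub>M PB)"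
    by (intro measurable_run_chain[OF T] measurable_compose[OF measurable_fst run_k])
  note H = measurable_compose[OF this h]
  have U_run: "run_chain T y 0 k (U \<omega>) = run_chain T y 0 k (\<lambda>i. Xi i \<omega>)" for \<omega>
    unfolding U_def by (rule run_chain_cong) auto
  have W_run: "run_chain T y' k s (W \<omega>) = run_chain T y' k s (\<lambda>i. Xi i \<omega>)" for y' \<omega>
    unfolding W_def by (rule run_chain_cong) auto
  have "(\<integral>\<^sup>+\<omega>. h (run_chain T y 0 (k + s) (\<lambda>i. Xi i \<omega>)) \<partial>M)
      = (\<integral>\<^sup>+u. (\<integral>\<^sup>+\<omega>. h (run_chain T (run_chain T y 0 k u) k s (\<lambda>i. Xi i \<omega>)) \<partial>M) \<partial>distr M PA U)"
    using nn_integral_indep_var_Pair[OF UW H] by (simp add: run_chain_add U_run W_run)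
  also have "\<dots> \<le> (\<integral>\<^sup>+u. B (run_chain T y 0 k u) \<partial>distr M PA U)"
    by (intro nn_integral_mono bound)
  also have "\<dots> = (\<integral>\<^sup>+\<omega>. B (run_chain T y 0 k (\<lambda>i. Xi i \<omega>)) \<partial>M)"
    using measurable_compose[OF run_k B] by (simp add: nn_integral_distr[OF U] U_run)
  finally show ?thesis .
qed

end

section \<open>The proximal subproblem\<close>

text \<open>Up to terms independent of \<open>y\<close>, \<open>prox_obj \<sigma> \<alpha> \<theta> y\<close> is the objective
  \<open>L\<^sup>k\<^sub>\<sigma>(y, \<lambda>\<^sup>k) + \<alpha>/2 \<parallel>y - x\<^sup>k\<parallel>\<^sup>2\<close> of the proximal subproblem, with the data of iteration \<open>k\<close>
  collected in \<open>\<theta> = (x\<^sup>k, \<lambda>\<^sup>k, v\<^sub>0, G, (v\<^sub>i)\<^sub>i)\<close>; this makes the proximal point a continuous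
  function of \<open>\<theta>\<close>.\<close>

definition prox_obj ::
  "real \<Rightarrow> real \<Rightarrow> 'n::euclidean_space \<times> (real^'p) \<times> 'n \<times> (real^'p) \<times> ('n^'p) \<Rightarrow> 'n \<Rightarrow> real" where
  "prox_obj \<sigma> \<alpha> \<theta> y = (case \<theta> of (xk, l, a, b, e) \<Rightarrow>
     inner a (y - xk)
     + (1 / (2 * \<sigma>)) * (\<Sum>i\<in>UNIV. (max 0 (l $ i + \<sigma> * (b $ i + inner (e $ i) (y - xk))))\<^sup>2)
     + (\<alpha> / 2) * (norm (y - xk))\<^sup>2)"

lemma prox_obj_strongly_convex:
  assumes "0 < \<sigma>"
  shows "strongly_convex_on C \<alpha> (prox_obj \<sigma> \<alpha> \<theta>)"
  unfolding strongly_convex_on_def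
proof (intro ballI allI impI)
  fix y w and t :: real assume t: "0 \<le> t \<and> t \<le> 1"
  obtain xk l a b e where \<theta>: "\<theta> = (xk, l, a, b, e)" by (cases \<theta>) auto
  define A where "A = (\<lambda>u. l + \<sigma> *\<^sub>R (b + (\<chi> i. inner (e $ i) (u - xk))))"
  have A_comb: "A ((1 - t) *\<^sub>R y + t *\<^sub>R w) $ i = (1 - t) * A y $ i + t * A w $ i" for i
    by (simp add: A_def inner_diff_right inner_add_right algebra_simps)
  define S where "S = (\<lambda>u. \<Sum>i\<in>UNIV. (max 0 (A u $ i))\<^sup>2)"
  have S: "S ((1 - t) *\<^sub>R y + t *\<^sub>R w) \<le> (1 - t) * S y + t * S w"
    unfolding S_def A_comb sum_distrib_left sum.distrib[symmetric]
    using t by (intro sum_mono power2_max_0_convex_comb) auto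
  have N: "(norm ((1 - t) *\<^sub>R y + t *\<^sub>R w - xk))\<^sup>2
      = (1 - t) * (norm (y - xk))\<^sup>2 + t * (norm (w - xk))\<^sup>2 - t * (1 - t) * (norm (y - w))\<^sup>2"
    using power2_norm_convex_comb[of t "y - xk" "w - xk"] by (simp add: algebra_simps)
  have eq: "prox_obj \<sigma> \<alpha> \<theta> u = inner a (u - xk) + (1 / (2 * \<sigma>)) * S u + (\<alpha> / 2) * (norm (u - xk))\<^sup>2" for u
    by (simp add: prox_obj_def \<theta> S_def A_def)
  have "(1 / (2 * \<sigma>)) * S ((1 - t) *\<^sub>R y + t *\<^sub>R w) \<le> (1 / (2 * \<sigma>)) * ((1 - t) * S y + t * S w)"
    using S assms by (intro mult_left_mono) auto
  then show "prox_obj \<sigma> \<alpha> \<theta> ((1 - t) *\<^sub>R y + t *\<^sub>R w)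
      \<le> (1 - t) * prox_obj \<sigma> \<alpha> \<theta> y + t * prox_obj \<sigma> \<alpha> \<theta> w - (\<alpha> / 2) * (t * (1 - t)) * (norm (y - w))\<^sup>2"
    using assms unfolding eq N by (simp add: inner_diff_right inner_add_right algebra_simps) (simp add: field_simps)
qed

lemma continuous_on_prox_obj: "continuous_on UNIV (\<lambda>p. prox_obj \<sigma> \<alpha> (fst p) (snd p))"
proof -
  have alt: "prox_obj \<sigma> \<alpha> \<theta> y = inner (fst (snd (snd \<theta>))) (y - fst \<theta>)
     + (1 / (2 * \<sigma>)) * (\<Sum>i\<in>UNIV. (max 0 (fst (snd \<theta>) $ i + \<sigma> * (fst (snd (snd (snd \<theta>))) $ i
        + inner (snd (snd (snd (snd \<theta>))) $ i) (y - fst \<theta>))))\<^sup>2)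
     + (\<alpha> / 2) * (norm (y - fst \<theta>))\<^sup>2" for \<theta> y
    by (cases \<theta>) (auto simp: prox_obj_def)
  show ?thesis
    unfolding alt by (intro continuous_intros)
qed

definition prox_point :: "'n::euclidean_space set \<Rightarrow> real \<Rightarrow> real \<Rightarrow>
    'n \<times> (real^'p) \<times> 'n \<times> (real^'p) \<times> ('n^'p) \<Rightarrow> 'n" where
  "prox_point C \<sigma> \<alpha> \<theta> = (SOME y. y \<in> C \<and> (\<forall>u\<in>C. prox_obj \<sigma> \<alpha> \<theta> y \<le> prox_obj \<sigma> \<alpha> \<theta> u))"

lemma prox_point:
  assumes "compact C" "convex C" "C \<noteq> {}" "0 < \<sigma>" "0 < \<alpha>"
  shows prox_point_in: "prox_point C \<sigma> \<alpha> \<theta> \<in> C"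
    and prox_point_min: "u \<in> C \<Longrightarrow> prox_obj \<sigma> \<alpha> \<theta> (prox_point C \<sigma> \<alpha> \<theta>) \<le> prox_obj \<sigma> \<alpha> \<theta> u"
    and continuous_on_prox_point: "continuous_on UNIV (prox_point C \<sigma> \<alpha>)"
proof -
  have "y1 = y2" if "y1 \<in> C" "\<forall>u\<in>C. prox_obj \<sigma> \<alpha> \<theta>' y1 \<le> prox_obj \<sigma> \<alpha> \<theta>' u"
      "y2 \<in> C" "\<forall>u\<in>C. prox_obj \<sigma> \<alpha> \<theta>' y2 \<le> prox_obj \<sigma> \<alpha> \<theta>' u" for \<theta>' y1 y2
    using that assms prox_obj_strongly_convex
    by (intro strongly_convex_on_argmin_unique[where f="prox_obj \<sigma> \<alpha> \<theta>'"]) blast+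
  note argmin = continuous_on_unique_argmin[OF assms(1,3) continuous_on_prox_obj this]
  show "prox_point C \<sigma> \<alpha> \<theta> \<in> C" "continuous_on UNIV (prox_point C \<sigma> \<alpha>)"
    using argmin(1,3) by (simp_all add: prox_point_def[abs_def])
  show "u \<in> C \<Longrightarrow> prox_obj \<sigma> \<alpha> \<theta> (prox_point C \<sigma> \<alpha> \<theta>) \<le> prox_obj \<sigma> \<alpha> \<theta> u"
    using argmin(2) by (simp add: prox_point_def)
qed

section \<open>One step of SLPMM\<close>

lemma borel_measurable_vec_lambda:
  fixes f :: "'a \<Rightarrow> 'p::finite \<Rightarrow> 'b::euclidean_space"
  assumes "\<And>i. (\<lambda>x. f x i) \<in> borel_measurable M"
  shows "(\<lambda>x. \<chi> i. f x i) \<in> borel_measurable M"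
proof (subst borel_measurable_euclidean_space, intro ballI)
  fix b :: "'b^'p" assume "b \<in> Basis"
  then obtain i u where b: "b = axis i u" "u \<in> Basis" unfolding Basis_vec_def by auto
  have "(\<lambda>x. f x i \<bullet> u) \<in> borel_measurable M" using assms[of i] by measurable
  then show "(\<lambda>x. (\<chi> i. f x i) \<bullet> b) \<in> borel_measurable M" unfolding b by (simp add: inner_axis)
qed

lemma borel_measurable_uncurry_compose:
  fixes H :: "'a::second_countable_topology \<Rightarrow> 'b::second_countable_topology \<Rightarrow> 'c::topological_space"
  assumes "(\<lambda>p. H (fst p) (snd p)) \<in> borel_measurable borel"
    and "f \<in> borel_measurable N" and "g \<in> borel_measurable N"
  shows "(\<lambda>x. H (f x) (g x)) \<in> borel_measurable N"
  using measurable_compose[OF borel_measurable_Pair[OF assms(2,3)] assms(1)] by simp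

locale slpmm_data =
  fixes C :: "'n::euclidean_space set" and \<sigma> \<alpha> :: real
    and F :: "'n \<Rightarrow> 'q::euclidean_space \<Rightarrow> real"
    and G :: "'n \<Rightarrow> 'q \<Rightarrow> real^'p"
    and v0 :: "'n \<Rightarrow> 'q \<Rightarrow> 'n"
    and v :: "'p \<Rightarrow> 'n \<Rightarrow> 'q \<Rightarrow> 'n"
    and Xset :: "'q set" and R \<nu>g \<kappa>f \<kappa>g :: real and xhat :: 'n
  assumes C_compact: "compact C" and C_convex: "convex C" and C_nonempty: "C \<noteq> {}"
    and \<sigma>_pos: "0 < \<sigma>" and \<alpha>_pos: "0 < \<alpha>"
    and v_subgrad: "\<And>x z i. x \<in> C \<Longrightarrow> z \<in> Xset \<Longrightarrow> subgrad_on C (\<lambda>y. G y z $ i) x (v i x z)"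
    and diam_C: "\<And>x' x''. x' \<in> C \<Longrightarrow> x'' \<in> C \<Longrightarrow> norm (x' - x'') \<le> R"
    and G_bounded: "\<And>x z. x \<in> C \<Longrightarrow> z \<in> Xset \<Longrightarrow> norm (G x z) \<le> \<nu>g"
    and subgrad_bounded: "\<And>x z i. x \<in> C \<Longrightarrow> z \<in> Xset \<Longrightarrow> norm (v0 x z) \<le> \<kappa>f \<and> norm (v i x z) \<le> \<kappa>g"
    and xhat_in_C: "xhat \<in> C"
    and G_meas: "(\<lambda>y. G (fst y) (snd y)) \<in> borel_measurable borel"
    and v0_meas: "(\<lambda>y. v0 (fst y) (snd y)) \<in> borel_measurable borel"
    and v_meas: "\<And>i. (\<lambda>y. v i (fst y) (snd y)) \<in> borel_measurable borel"
begin

definition step_data :: "'n \<times> (real^'p) \<Rightarrow> 'q \<Rightarrow> 'n \<times> (real^'p) \<times> 'n \<times> (real^'p) \<times> ('n^'p)" where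
  "step_data y z = (fst y, snd y, v0 (fst y) z, G (fst y) z, \<chi> i. v i (fst y) z)"

definition slpmm_step :: "'n \<times> (real^'p) \<Rightarrow> 'q \<Rightarrow> 'n \<times> (real^'p)" where
  "slpmm_step y z =
     (let xn = prox_point C \<sigma> \<alpha> (step_data y z)
      in (xn, \<chi> i. max 0 (snd y $ i + \<sigma> * (G (fst y) z $ i + inner (v i (fst y) z) (xn - fst y)))))"

lemma slpmm_Suc:
  "slpmm C F G v0 v \<sigma> \<alpha> x0 smp (Suc k) = slpmm_step (slpmm C F G v0 v \<sigma> \<alpha> x0 smp k) (smp k)"
proof -
  have "slpmm_L F G v0 v \<sigma> (fst y) z x (snd y) + (\<alpha> / 2) * (norm (x - fst y))\<^sup>2
      = prox_obj \<sigma> \<alpha> (step_data y z) x + (F (fst y) z - (1 / (2 * \<sigma>)) * (norm (snd y))\<^sup>2)" for y z x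
    unfolding slpmm_L_def prox_obj_def step_data_def by (simp add: algebra_simps)
  then show ?thesis
    by (simp add: slpmm_step_def prox_point_def Let_def)
qed

lemma slpmm_eq_run_chain: "slpmm C F G v0 v \<sigma> \<alpha> x0 smp k = run_chain slpmm_step (x0, 0) 0 k smp"
  by (induction k) (simp_all only: slpmm_Suc slpmm.simps(1) run_chain.simps add_0)

definition admissible :: "'n \<times> (real^'p) \<Rightarrow> bool" where
  "admissible y \<longleftrightarrow> fst y \<in> C \<and> (\<forall>i. 0 \<le> snd y $ i)"

lemmas prox_point_in_C = prox_point_in[OF C_compact C_convex C_nonempty \<sigma>_pos \<alpha>_pos]
  and prox_point_min_C = prox_point_min[OF C_compact C_convex C_nonempty \<sigma>_pos \<alpha>_pos]

lemma fst_slpmm_step_in_C: "fst (slpmm_step y z) \<in> C"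
  by (simp add: slpmm_step_def Let_def prox_point_in_C)

lemma admissible_slpmm_step: "admissible (slpmm_step y z)"
  by (simp add: admissible_def fst_slpmm_step_in_C) (simp add: slpmm_step_def Let_def)

lemma admissible_run_chain: "admissible y \<Longrightarrow> admissible (run_chain slpmm_step y m j f)"
  by (cases j) (auto simp: admissible_slpmm_step)

lemma norm_slpmm_step_mult_diff:
  assumes y: "admissible y" and z: "z \<in> Xset"
  shows "norm (snd (slpmm_step y z) - snd y) \<le> \<sigma> * beta0 \<nu>g \<kappa>g R CARD('p)"
proof -
  let ?xk = "fst y" and ?xn = "fst (slpmm_step y z)"
  define a where "a = (\<chi> i. G ?xk z $ i + inner (v i ?xk z) (?xn - ?xk))"
  have xk: "?xk \<in> C" using y by (simp add: admissible_def)
  have "norm (snd (slpmm_step y z) - snd y) \<le> norm (\<sigma> *\<^sub>R a)"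
  proof (rule norm_le_componentwise_cart)
    fix i
    have "\<bar>max 0 (snd y $ i + \<sigma> * a $ i) - snd y $ i\<bar> \<le> \<bar>\<sigma> * a $ i\<bar>"
      using y by (auto simp: admissible_def max_def)
    then show "norm ((snd (slpmm_step y z) - snd y) $ i) \<le> norm ((\<sigma> *\<^sub>R a) $ i)"
      by (simp add: slpmm_step_def Let_def a_def)
  qed
  also have "\<dots> = \<sigma> * norm a" using \<sigma>_pos by simp
  also have "\<dots> \<le> \<sigma> * beta0 \<nu>g \<kappa>g R CARD('p)"
  proof (rule mult_left_mono)
    have "\<bar>inner (v i ?xk z) (?xn - ?xk)\<bar> \<le> \<kappa>g * R" for i
    proof -
      have "\<bar>inner (v i ?xk z) (?xn - ?xk)\<bar> \<le> norm (v i ?xk z) * norm (?xn - ?xk)"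
        by (rule Cauchy_Schwarz_ineq2)
      also have "\<dots> \<le> \<kappa>g * R"
        using subgrad_bounded[OF xk z, of i] diam_C[OF fst_slpmm_step_in_C xk]
        by (intro mult_mono) (auto intro: order_trans[OF norm_ge_zero])
      finally show ?thesis .
    qed
    then have "norm (\<chi> i. inner (v i ?xk z) (?xn - ?xk)) \<le> sqrt (real CARD('p)) * (\<kappa>g * R)"
      by (intro norm_vec_le_sqrt_card) simp
    moreover have "a = G ?xk z + (\<chi> i. inner (v i ?xk z) (?xn - ?xk))"
      by (simp add: a_def vec_eq_iff)
    moreover have "norm (G ?xk z + (\<chi> i. inner (v i ?xk z) (?xn - ?xk)))
        \<le> norm (G ?xk z) + norm (\<chi> i. inner (v i ?xk z) (?xn - ?xk))"
      by (rule norm_triangle_ineq)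
    ultimately show "norm a \<le> beta0 \<nu>g \<kappa>g R CARD('p)"
      using G_bounded[OF xk z] unfolding beta0_def by (simp add: mult.assoc)
  qed (use \<sigma>_pos in simp)
  finally show ?thesis .
qed

lemma norm_run_chain_mult_diff:
  assumes "admissible y" "\<And>i. m \<le> i \<Longrightarrow> i < m + j \<Longrightarrow> f i \<in> Xset"
  shows "\<bar>norm (snd (run_chain slpmm_step y m j f)) - norm (snd y)\<bar> \<le> real j * (\<sigma> * beta0 \<nu>g \<kappa>g R CARD('p))"
proof -
  have "norm (snd (run_chain slpmm_step y m j f) - snd y) \<le> real j * (\<sigma> * beta0 \<nu>g \<kappa>g R CARD('p))"
    using assms(2)
  proof (induction j)
    case (Suc j)
    have "norm (snd (run_chain slpmm_step y m (Suc j) f) - snd (run_chain slpmm_step y m j f)) \<le> \<sigma> * beta0 \<nu>g \<kappa>g R CARD('p)"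
      using norm_slpmm_step_mult_diff admissible_run_chain[OF assms(1)] Suc.prems[of "m + j"] by simp
    with Suc show ?case
      using norm_triangle_ineq[of "snd (run_chain slpmm_step y m (Suc j) f) - snd (run_chain slpmm_step y m j f)"
          "snd (run_chain slpmm_step y m j f) - snd y"]
      by (simp add: algebra_simps)
  qed simp
  then show ?thesis using norm_triangle_ineq3 order_trans by blast
qed

definition lyapunov :: "'n \<times> (real^'p) \<Rightarrow> real" where
  "lyapunov y = (norm (snd y))\<^sup>2 + \<alpha> * \<sigma> * (norm (xhat - fst y))\<^sup>2"

lemma prox_obj_step_data_xhat_le:
  assumes y: "fst y \<in> C" and z: "z \<in> Xset"
  shows "prox_obj \<sigma> \<alpha> (step_data y z) xhat
    \<le> inner (v0 (fst y) z) (xhat - fst y)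
       + (1 / (2 * \<sigma>)) * ((norm (snd y))\<^sup>2 + 2 * \<sigma> * inner (snd y) (G xhat z) + \<sigma>\<^sup>2 * \<nu>g\<^sup>2)
       + (\<alpha> / 2) * (norm (xhat - fst y))\<^sup>2"
proof -
  let ?xk = "fst y" and ?l = "snd y"
  have "(\<Sum>i\<in>UNIV. (max 0 (?l $ i + \<sigma> * (G ?xk z $ i + inner (v i ?xk z) (xhat - ?xk))))\<^sup>2)
      \<le> (\<Sum>i\<in>UNIV. (?l $ i + \<sigma> * G xhat z $ i)\<^sup>2)"
  proof (rule sum_mono)
    fix i
    have "G ?xk z $ i + inner (v i ?xk z) (xhat - ?xk) \<le> G xhat z $ i"
      using v_subgrad[OF y z, of i] xhat_in_C unfolding subgrad_on_def by auto
    then have "?l $ i + \<sigma> * (G ?xk z $ i + inner (v i ?xk z) (xhat - ?xk)) \<le> ?l $ i + \<sigma> * G xhat z $ i"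
      using \<sigma>_pos by simp
    then show "(max 0 (?l $ i + \<sigma> * (G ?xk z $ i + inner (v i ?xk z) (xhat - ?xk))))\<^sup>2
        \<le> (?l $ i + \<sigma> * G xhat z $ i)\<^sup>2"
      by (cases "?l $ i + \<sigma> * (G ?xk z $ i + inner (v i ?xk z) (xhat - ?xk)) \<le> 0")
        (auto intro: power_mono simp: max_def)
  qed
  also have "\<dots> = (norm ?l)\<^sup>2 + 2 * \<sigma> * inner ?l (G xhat z) + \<sigma>\<^sup>2 * (norm (G xhat z))\<^sup>2"
    unfolding power2_norm_vec_eq_sum inner_vec_def
    by (simp add: power2_eq_square algebra_simps sum.distrib sum_distrib_left)
  also have "\<dots> \<le> (norm ?l)\<^sup>2 + 2 * \<sigma> * inner ?l (G xhat z) + \<sigma>\<^sup>2 * \<nu>g\<^sup>2"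
    using G_bounded[OF xhat_in_C z] by (intro add_left_mono mult_left_mono power_mono) auto
  finally show ?thesis
    using \<sigma>_pos by (simp add: prox_obj_def step_data_def divide_right_mono)
qed

text \<open>The one-step estimate combines the growth of the strongly convex proximal objective away
  from its minimiser, tested at the Slater point \<open>xhat\<close>, with the subgradient inequality
  for the constraints at \<open>xhat\<close>.\<close>

lemma lyapunov_slpmm_step:
  assumes y: "fst y \<in> C" and z: "z \<in> Xset"
  shows "lyapunov (slpmm_step y z)
           \<le> lyapunov y + 2 * \<sigma> * inner (snd y) (G xhat z) + \<sigma>\<^sup>2 * \<nu>g\<^sup>2 + 2 * \<sigma> * \<kappa>f * R"
proof -
  let ?xk = "fst y" and ?xn = "fst (slpmm_step y z)" and ?l = "snd y" and ?l' = "snd (slpmm_step y z)"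
  let ?\<theta> = "step_data y z" and ?g = "(norm ?l)\<^sup>2 + 2 * \<sigma> * inner ?l (G xhat z) + \<sigma>\<^sup>2 * \<nu>g\<^sup>2"
  have xn: "?xn = prox_point C \<sigma> \<alpha> ?\<theta>" by (simp add: slpmm_step_def Let_def)
  have "prox_obj \<sigma> \<alpha> ?\<theta> ?xn + (\<alpha> / 2) * (norm (?xn - xhat))\<^sup>2 \<le> prox_obj \<sigma> \<alpha> ?\<theta> xhat"
    unfolding xn
    by (intro strongly_convex_on_min_growth[OF prox_obj_strongly_convex[OF \<sigma>_pos] C_convex]
        prox_point_in_C prox_point_min_C xhat_in_C)
  then have growth: "prox_obj \<sigma> \<alpha> ?\<theta> ?xn + (\<alpha> / 2) * (norm (xhat - ?xn))\<^sup>2 \<le> prox_obj \<sigma> \<alpha> ?\<theta> xhat"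
    by (simp only: norm_minus_commute)
  have at_xn: "prox_obj \<sigma> \<alpha> ?\<theta> ?xn
      = inner (v0 ?xk z) (?xn - ?xk) + (1 / (2 * \<sigma>)) * (norm ?l')\<^sup>2 + (\<alpha> / 2) * (norm (?xn - ?xk))\<^sup>2"
    by (simp add: prox_obj_def step_data_def power2_norm_vec_eq_sum slpmm_step_def Let_def)
  have "inner (v0 ?xk z) (xhat - ?xn) \<le> norm (v0 ?xk z) * norm (xhat - ?xn)"
    by (rule norm_cauchy_schwarz)
  also have "\<dots> \<le> \<kappa>f * R"
    using subgrad_bounded[OF y z] diam_C[OF xhat_in_C fst_slpmm_step_in_C]
    by (intro mult_mono) (auto intro: order_trans[OF norm_ge_zero])
  finally have "inner (v0 ?xk z) (xhat - ?xk) - inner (v0 ?xk z) (?xn - ?xk) \<le> \<kappa>f * R"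
    by (simp add: inner_diff_right)
  then have "(1 / (2 * \<sigma>)) * (norm ?l')\<^sup>2 + (\<alpha> / 2) * (norm (xhat - ?xn))\<^sup>2
      \<le> \<kappa>f * R + (1 / (2 * \<sigma>)) * ?g + (\<alpha> / 2) * (norm (xhat - ?xk))\<^sup>2"
    using growth at_xn prox_obj_step_data_xhat_le[OF y z] \<alpha>_pos
      zero_le_power2[of "norm (?xn - ?xk)"] mult_nonneg_nonneg[of "\<alpha> / 2" "(norm (?xn - ?xk))\<^sup>2"]
    by linarith
  then have "2 * \<sigma> * ((1 / (2 * \<sigma>)) * (norm ?l')\<^sup>2 + (\<alpha> / 2) * (norm (xhat - ?xn))\<^sup>2)
      \<le> 2 * \<sigma> * (\<kappa>f * R + (1 / (2 * \<sigma>)) * ?g + (\<alpha> / 2) * (norm (xhat - ?xk))\<^sup>2)"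
    using \<sigma>_pos by (intro mult_left_mono) auto
  then show ?thesis
    unfolding lyapunov_def using \<sigma>_pos by (simp add: algebra_simps power2_eq_square)
qed

lemma measurable_slpmm_step: "(\<lambda>p. slpmm_step (fst p) (snd p)) \<in> borel_measurable borel"
proof -
  have x: "(\<lambda>p::('n \<times> (real^'p)) \<times> 'q. fst (fst p)) \<in> borel_measurable borel"
    and l: "(\<lambda>p::('n \<times> (real^'p)) \<times> 'q. snd (fst p)) \<in> borel_measurable borel"
    and z: "(\<lambda>p::('n \<times> (real^'p)) \<times> 'q. snd p) \<in> borel_measurable borel"
    by (intro borel_measurable_continuous_onI continuous_intros)+
  note [measurable] = x l
  have [measurable]: "(\<lambda>x::real^'p. x $ i) \<in> borel_measurable borel" for i
    by (intro borel_measurable_continuous_onI continuous_intros)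
  note [measurable] = borel_measurable_uncurry_compose[OF G_meas x z]
    borel_measurable_uncurry_compose[OF v0_meas x z] borel_measurable_uncurry_compose[OF v_meas x z]
  have [measurable]: "(\<lambda>p. step_data (fst p) (snd p)) \<in> borel_measurable borel"
    unfolding step_data_def by (intro borel_measurable_Pair borel_measurable_vec_lambda) measurable
  have [measurable]: "(\<lambda>p. prox_point C \<sigma> \<alpha> (step_data (fst p) (snd p))) \<in> borel_measurable borel"
    using measurable_compose[OF _ borel_measurable_continuous_onI[OF
          continuous_on_prox_point[OF C_compact C_convex C_nonempty \<sigma>_pos \<alpha>_pos]]]
    by measurable
  show ?thesis
    unfolding slpmm_step_def Let_def by (intro borel_measurable_Pair borel_measurable_vec_lambda) measurable
qed

end

section \<open>The multiplier process\<close>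

locale slpmm_process = slpmm_data C \<sigma> \<alpha> F G v0 v Xset R \<nu>g \<kappa>f \<kappa>g xhat + prob_space M
  for C :: "'n::euclidean_space set" and \<sigma> \<alpha> F
    and G :: "'n \<Rightarrow> 'q::euclidean_space \<Rightarrow> real^'p"
    and v0 v Xset R \<nu>g \<kappa>f \<kappa>g xhat and M :: "'w measure" +
  fixes Xi :: "nat \<Rightarrow> 'w \<Rightarrow> 'q" and x0 :: 'n and \<epsilon>0 :: real
  assumes Xi_rv: "\<And>k. Xi k \<in> borel_measurable M"
    and Xi_indep: "indep_vars (\<lambda>_. borel) Xi UNIV"
    and Xi_ident: "\<And>k. distr M borel (Xi k) = distr M borel (Xi 0)"
    and Xi_supp: "\<And>k. AE \<omega> in M. Xi k \<omega> \<in> Xset"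
    and x0_in_C: "x0 \<in> C"
    and \<epsilon>0_pos: "0 < \<epsilon>0"
    and slater: "\<And>i. expectation (\<lambda>\<omega>. G xhat (Xi 0 \<omega>) $ i) \<le> - \<epsilon>0"
begin

definition state_at :: "'n \<times> (real^'p) \<Rightarrow> nat \<Rightarrow> nat \<Rightarrow> 'w \<Rightarrow> 'n \<times> (real^'p)" where
  "state_at y m j \<omega> = run_chain slpmm_step y m j (\<lambda>i. Xi i \<omega>)"

definition mult_norm :: "'n \<times> (real^'p) \<Rightarrow> nat \<Rightarrow> nat \<Rightarrow> 'w \<Rightarrow> real" where
  "mult_norm y m j \<omega> = norm (snd (state_at y m j \<omega>))"

lemma state_at_Suc: "state_at y m (Suc j) \<omega> = slpmm_step (state_at y m j \<omega>) (Xi (m + j) \<omega>)"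
  by (simp add: state_at_def)

lemma measurable_state_at: "state_at y m j \<in> borel_measurable M"
  unfolding state_at_def[abs_def] by (rule measurable_run_chain[OF measurable_slpmm_step]) (auto simp: Xi_rv)

lemma borel_measurable_state_at_comp:
  "continuous_on UNIV g \<Longrightarrow> (\<lambda>\<omega>. g (state_at y m j \<omega>)) \<in> borel_measurable M"
  using measurable_compose[OF measurable_state_at borel_measurable_continuous_onI] by blast

lemma AE_mult_norm_near:
  assumes "admissible y"
  shows "AE \<omega> in M. \<forall>j. \<bar>mult_norm y m j \<omega> - norm (snd y)\<bar> \<le> real j * (\<sigma> * beta0 \<nu>g \<kappa>g R CARD('p))"
proof -
  have "AE \<omega> in M. \<forall>i. Xi i \<omega> \<in> Xset" using Xi_supp by (simp add: AE_all_countable)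
  then show ?thesis
    by eventually_elim (auto simp: mult_norm_def state_at_def intro!: norm_run_chain_mult_diff assms)
qed

lemma AE_mult_norm_le:
  assumes "admissible y"
  shows "AE \<omega> in M. mult_norm y m j \<omega> \<le> norm (snd y) + real j * (\<sigma> * beta0 \<nu>g \<kappa>g R CARD('p))"
  using AE_mult_norm_near[OF assms, of m] by eventually_elim (drule spec[of _ j], linarith)

lemma integrable_state_at_comp:
  fixes g :: "'n \<times> (real^'p) \<Rightarrow> real"
  assumes y: "admissible y" and g: "continuous_on UNIV g"
    and bound: "\<And>y'. admissible y' \<Longrightarrow> norm (snd y') \<le> norm (snd y) + real j * (\<sigma> * beta0 \<nu>g \<kappa>g R CARD('p))
                    \<Longrightarrow> \<bar>g y'\<bar> \<le> B"
  shows "integrable M (\<lambda>\<omega>. g (state_at y m j \<omega>))"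
proof (rule integrable_const_bound[where B=B])
  show "AE \<omega> in M. norm (g (state_at y m j \<omega>)) \<le> B"
    using AE_mult_norm_le[OF y, of m j]
    by eventually_elim (auto simp: mult_norm_def state_at_def intro!: bound admissible_run_chain y)
qed (rule borel_measurable_state_at_comp[OF g])

lemma integrable_mult_norm: "admissible y \<Longrightarrow> integrable M (mult_norm y m j)"
  unfolding mult_norm_def[abs_def]
  by (rule integrable_state_at_comp[where B="norm (snd y) + real j * (\<sigma> * beta0 \<nu>g \<kappa>g R CARD('p))"])
    (auto intro!: continuous_intros)

lemma integrable_mult_norm_sq: "admissible y \<Longrightarrow> integrable M (\<lambda>\<omega>. (mult_norm y m j \<omega>)\<^sup>2)"
  unfolding mult_norm_def[abs_def]
  by (rule integrable_state_at_comp[where B="(norm (snd y) + real j * (\<sigma> * beta0 \<nu>g \<kappa>g R CARD('p)))\<^sup>2"])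
    (auto intro!: continuous_intros intro: power_mono)

lemma integrable_mult_component: "admissible y \<Longrightarrow> integrable M (\<lambda>\<omega>. snd (state_at y m j \<omega>) $ i)"
  by (rule integrable_state_at_comp[where B="norm (snd y) + real j * (\<sigma> * beta0 \<nu>g \<kappa>g R CARD('p))"])
    (auto intro!: continuous_intros intro: order_trans[OF component_le_norm_cart])

lemma lyapunov_bounds:
  assumes "admissible y"
  shows "(norm (snd y))\<^sup>2 \<le> lyapunov y" and "lyapunov y \<le> (norm (snd y))\<^sup>2 + \<alpha> * \<sigma> * R\<^sup>2"
proof -
  have "norm (xhat - fst y) \<le> R" using diam_C[OF xhat_in_C] assms by (simp add: admissible_def)
  then have "\<alpha> * \<sigma> * (norm (xhat - fst y))\<^sup>2 \<le> \<alpha> * \<sigma> * R\<^sup>2"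
    using \<alpha>_pos \<sigma>_pos by (intro mult_left_mono power_mono) auto
  then show "lyapunov y \<le> (norm (snd y))\<^sup>2 + \<alpha> * \<sigma> * R\<^sup>2" by (simp add: lyapunov_def)
  show "(norm (snd y))\<^sup>2 \<le> lyapunov y" using \<alpha>_pos \<sigma>_pos by (simp add: lyapunov_def)
qed

lemma integrable_lyapunov: "admissible y \<Longrightarrow> integrable M (\<lambda>\<omega>. lyapunov (state_at y m j \<omega>))"
proof (rule integrable_state_at_comp[where B="(norm (snd y) + real j * (\<sigma> * beta0 \<nu>g \<kappa>g R CARD('p)))\<^sup>2
      + \<alpha> * \<sigma> * R\<^sup>2"])
  show "continuous_on UNIV lyapunov" unfolding lyapunov_def by (intro continuous_intros)
  fix y' assume y': "admissible y'"
    and "norm (snd y') \<le> norm (snd y) + real j * (\<sigma> * beta0 \<nu>g \<kappa>g R CARD('p))"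
  then have "(norm (snd y'))\<^sup>2 \<le> (norm (snd y) + real j * (\<sigma> * beta0 \<nu>g \<kappa>g R CARD('p)))\<^sup>2"
    by (intro power_mono) auto
  then show "\<bar>lyapunov y'\<bar> \<le> (norm (snd y) + real j * (\<sigma> * beta0 \<nu>g \<kappa>g R CARD('p)))\<^sup>2 + \<alpha> * \<sigma> * R\<^sup>2"
    using lyapunov_bounds[OF y'] \<alpha>_pos \<sigma>_pos zero_le_power2[of "norm (snd y')"]
      mult_nonneg_nonneg[of "\<alpha> * \<sigma>" "R\<^sup>2"]
    unfolding abs_le_iff by (intro conjI; linarith)
qed

lemma measurable_G_xhat_component: "(\<lambda>z. G xhat z $ i) \<in> borel_measurable borel"
proof -
  have "(\<lambda>z::'q. xhat) \<in> borel_measurable borel" "(\<lambda>z::'q. z) \<in> borel_measurable borel" by simp_all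
  from borel_measurable_uncurry_compose[OF G_meas this] have "(\<lambda>z. G xhat z) \<in> borel_measurable borel" .
  then show ?thesis
    using measurable_compose[OF _ borel_measurable_continuous_onI[OF continuous_on_component[OF continuous_on_id]]]
    by blast
qed

lemma integrable_G_xhat: "integrable M (\<lambda>\<omega>. G xhat (Xi k \<omega>) $ i)"
proof -
  have "AE \<omega> in M. norm (G xhat (Xi k \<omega>) $ i) \<le> \<nu>g"
    using Xi_supp[of k]
  proof eventually_elim
    case (elim \<omega>)
    then show ?case
      using G_bounded[OF xhat_in_C elim] component_le_norm_cart[of "G xhat (Xi k \<omega>)" i] by simp
  qed
  moreover have "(\<lambda>\<omega>. G xhat (Xi k \<omega>) $ i) \<in> borel_measurable M"
    using measurable_compose[OF Xi_rv measurable_G_xhat_component] .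
  ultimately show ?thesis by (intro integrable_const_bound[where B=\<nu>g])
qed

lemma expectation_G_xhat: "expectation (\<lambda>\<omega>. G xhat (Xi k \<omega>) $ i) \<le> - \<epsilon>0"
proof -
  have "expectation (\<lambda>\<omega>. G xhat (Xi k \<omega>) $ i) = integral\<^sup>L (distr M borel (Xi k)) (\<lambda>z. G xhat z $ i)"
    by (rule integral_distr[symmetric, OF Xi_rv measurable_G_xhat_component])
  also have "\<dots> = expectation (\<lambda>\<omega>. G xhat (Xi 0 \<omega>) $ i)"
    unfolding Xi_ident[of k] by (rule integral_distr[OF Xi_rv measurable_G_xhat_component])
  finally show ?thesis using slater[of i] by simp
qed

text \<open>The multiplier after \<open>j\<close> steps is nonnegative and independent of the next sample, so by the
  Slater condition its pairing with \<open>G xhat\<close> has expectation at most \<open>-\<epsilon>0\<close> times the expected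
  \<open>l\<^sub>1\<close>-norm, which dominates the Euclidean norm.\<close>

lemma expectation_inner_G_xhat:
  assumes y: "admissible y"
  shows "integrable M (\<lambda>\<omega>. inner (snd (state_at y m j \<omega>)) (G xhat (Xi (m + j) \<omega>)))"
    and "expectation (\<lambda>\<omega>. inner (snd (state_at y m j \<omega>)) (G xhat (Xi (m + j) \<omega>)))
           \<le> - \<epsilon>0 * expectation (mult_norm y m j)"
proof -
  let ?l = "\<lambda>i \<omega>. snd (state_at y m j \<omega>) $ i" and ?g = "\<lambda>i \<omega>. G xhat (Xi (m + j) \<omega>) $ i"
  have indep: "indep_var borel (?l i) borel (?g i)" for i
    unfolding state_at_def
    by (intro indep_var_run_chain_sample[OF Xi_indep measurable_slpmm_step _ measurable_G_xhat_component]
        borel_measurable_continuous_onI continuous_intros)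
  have l_int: "integrable M (?l i)" for i by (rule integrable_mult_component[OF y])
  note product = indep_var_lebesgue_integral[OF indep l_int integrable_G_xhat]
    indep_var_integrable[OF indep l_int integrable_G_xhat]
  show "integrable M (\<lambda>\<omega>. inner (snd (state_at y m j \<omega>)) (G xhat (Xi (m + j) \<omega>)))"
    unfolding inner_vec_def inner_real_def using product(2) by auto
  have nonneg: "0 \<le> ?l i \<omega>" for i \<omega>
    using admissible_run_chain[OF y] by (simp add: state_at_def admissible_def)
  have "expectation (\<lambda>\<omega>. inner (snd (state_at y m j \<omega>)) (G xhat (Xi (m + j) \<omega>)))
      = (\<Sum>i\<in>UNIV. expectation (?l i) * expectation (?g i))"
    unfolding inner_vec_def inner_real_def using product by (simp add: Bochner_Integration.integral_sum)
  also have "\<dots> \<le> (\<Sum>i\<in>UNIV. expectation (?l i) * (- \<epsilon>0))"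
    using nonneg by (intro sum_mono mult_left_mono expectation_G_xhat integral_nonneg_AE) auto
  also have "\<dots> = - \<epsilon>0 * expectation (\<lambda>\<omega>. \<Sum>i\<in>UNIV. ?l i \<omega>)"
    using l_int by (simp add: Bochner_Integration.integral_sum sum_distrib_left mult.commute)
  also have "\<dots> \<le> - \<epsilon>0 * expectation (mult_norm y m j)"
  proof -
    have "mult_norm y m j \<omega> \<le> (\<Sum>i\<in>UNIV. ?l i \<omega>)" for \<omega>
      using norm_le_l1_cart[of "snd (state_at y m j \<omega>)"] nonneg by (simp add: mult_norm_def)
    then have "expectation (mult_norm y m j) \<le> expectation (\<lambda>\<omega>. \<Sum>i\<in>UNIV. ?l i \<omega>)"
      using integrable_mult_norm[OF y] l_int by (intro integral_mono) auto
    then show ?thesis using \<epsilon>0_pos by simp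
  qed
  finally show "expectation (\<lambda>\<omega>. inner (snd (state_at y m j \<omega>)) (G xhat (Xi (m + j) \<omega>)))
      \<le> - \<epsilon>0 * expectation (mult_norm y m j)" .
qed

lemma expectation_lyapunov_Suc:
  assumes y: "admissible y"
  shows "expectation (\<lambda>\<omega>. lyapunov (state_at y m (Suc j) \<omega>))
    \<le> expectation (\<lambda>\<omega>. lyapunov (state_at y m j \<omega>)) - 2 * \<sigma> * \<epsilon>0 * expectation (mult_norm y m j)
      + (\<sigma>\<^sup>2 * \<nu>g\<^sup>2 + 2 * \<sigma> * \<kappa>f * R)"
proof -
  let ?V = "\<lambda>\<omega>. lyapunov (state_at y m j \<omega>)"
    and ?I = "\<lambda>\<omega>. inner (snd (state_at y m j \<omega>)) (G xhat (Xi (m + j) \<omega>))"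
    and ?c = "\<sigma>\<^sup>2 * \<nu>g\<^sup>2 + 2 * \<sigma> * \<kappa>f * R"
  have "AE \<omega> in M. lyapunov (state_at y m (Suc j) \<omega>) \<le> ?V \<omega> + 2 * \<sigma> * ?I \<omega> + ?c"
    using Xi_supp[of "m + j"]
  proof eventually_elim
    case (elim \<omega>)
    have "fst (state_at y m j \<omega>) \<in> C"
      using admissible_run_chain[OF y, of m j "\<lambda>i. Xi i \<omega>"] unfolding state_at_def admissible_def by blast
    from lyapunov_slpmm_step[OF this elim]
    show "lyapunov (state_at y m (Suc j) \<omega>) \<le> ?V \<omega> + 2 * \<sigma> * ?I \<omega> + ?c"
      unfolding state_at_Suc[of y m j \<omega>] by (simp only: add.assoc)
  qed
  moreover have "integrable M (\<lambda>\<omega>. ?V \<omega> + 2 * \<sigma> * ?I \<omega> + ?c)"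
    using integrable_lyapunov[OF y, of m j] expectation_inner_G_xhat(1)[OF y, of m j] by simp
  ultimately have "expectation (\<lambda>\<omega>. lyapunov (state_at y m (Suc j) \<omega>))
      \<le> expectation (\<lambda>\<omega>. ?V \<omega> + 2 * \<sigma> * ?I \<omega> + ?c)"
    using integrable_lyapunov[OF y, of m "Suc j"] by (intro integral_mono_AE)
  also have "\<dots> = expectation ?V + 2 * \<sigma> * expectation ?I + ?c"
    using integrable_lyapunov[OF y, of m j] expectation_inner_G_xhat(1)[OF y, of m j]
    by (simp add: prob_space Bochner_Integration.integral_add)
  also have "\<dots> \<le> expectation ?V + 2 * \<sigma> * (- \<epsilon>0 * expectation (mult_norm y m j)) + ?c"
    using mult_left_mono[OF expectation_inner_G_xhat(2)[OF y, of m j], of "2 * \<sigma>"] \<sigma>_pos by linarith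
  finally show ?thesis by simp
qed

lemma expectation_mult_norm_ge:
  assumes y: "admissible y"
  shows "norm (snd y) - real j * (\<sigma> * beta0 \<nu>g \<kappa>g R CARD('p)) \<le> expectation (mult_norm y m j)"
proof -
  have "AE \<omega> in M. norm (snd y) - real j * (\<sigma> * beta0 \<nu>g \<kappa>g R CARD('p)) \<le> mult_norm y m j \<omega>"
    using AE_mult_norm_near[OF y, of m] by eventually_elim (drule spec[of _ j], linarith)
  then have "expectation (\<lambda>_. norm (snd y) - real j * (\<sigma> * beta0 \<nu>g \<kappa>g R CARD('p)))
      \<le> expectation (mult_norm y m j)"
    using integrable_mult_norm[OF y] by (intro integral_mono_AE integrable_const)
  then show ?thesis by (simp add: prob_space)
qed

lemma expectation_lyapunov_le:
  assumes y: "admissible y"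
  shows "expectation (\<lambda>\<omega>. lyapunov (state_at y m j \<omega>))
    \<le> lyapunov y - 2 * \<sigma> * \<epsilon>0 * (\<Sum>l<j. norm (snd y) - real l * (\<sigma> * beta0 \<nu>g \<kappa>g R CARD('p)))
      + real j * (\<sigma>\<^sup>2 * \<nu>g\<^sup>2 + 2 * \<sigma> * \<kappa>f * R)"
proof (induction j)
  case 0
  then show ?case by (simp add: state_at_def prob_space)
next
  case (Suc j)
  have "2 * \<sigma> * \<epsilon>0 * (norm (snd y) - real j * (\<sigma> * beta0 \<nu>g \<kappa>g R CARD('p)))
      \<le> 2 * \<sigma> * \<epsilon>0 * expectation (mult_norm y m j)"
    using expectation_mult_norm_ge[OF y] \<sigma>_pos \<epsilon>0_pos by (intro mult_left_mono) auto
  with expectation_lyapunov_Suc[OF y, of m j] Suc show ?case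
    by (simp only: sum.lessThan_Suc of_nat_Suc distrib_left distrib_right)
qed

lemma parameters_nonneg: "0 \<le> R" "0 \<le> \<kappa>f" "0 \<le> \<kappa>g"
proof -
  have "Xset \<noteq> {}"
    using Xi_supp[of 0] AE_False by force
  then obtain z where z: "z \<in> Xset" by blast
  show "0 \<le> R" using diam_C[OF x0_in_C x0_in_C] by simp
  show "0 \<le> \<kappa>f" "0 \<le> \<kappa>g"
    using subgrad_bounded[OF x0_in_C z, of undefined] norm_ge_zero order_trans by blast+
qed

lemma \<epsilon>0_le_beta0: "\<epsilon>0 \<le> beta0 \<nu>g \<kappa>g R CARD('p)"
proof -
  have "AE \<omega> in M. - \<nu>g \<le> G xhat (Xi 0 \<omega>) $ i" for i
    using Xi_supp[of 0]
  proof eventually_elim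
    case (elim \<omega>)
    then show ?case
      using G_bounded[OF xhat_in_C elim] component_le_norm_cart[of "G xhat (Xi 0 \<omega>)" i] by linarith
  qed
  then have "expectation (\<lambda>_. - \<nu>g) \<le> expectation (\<lambda>\<omega>. G xhat (Xi 0 \<omega>) $ undefined)"
    using integrable_G_xhat by (intro integral_mono_AE integrable_const)
  then have "\<epsilon>0 \<le> \<nu>g" using slater[of undefined] by (simp add: prob_space)
  moreover have "0 \<le> sqrt (real CARD('p)) * \<kappa>g * R" using parameters_nonneg by simp
  ultimately show ?thesis unfolding beta0_def by linarith
qed

lemma beta0_pos: "0 < beta0 \<nu>g \<kappa>g R CARD('p)"
  using \<epsilon>0_le_beta0 \<epsilon>0_pos by linarith

definition drift_threshold :: "nat \<Rightarrow> real" where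
  "drift_threshold s = 2 * \<kappa>f * R / \<epsilon>0 + R\<^sup>2 * \<alpha> / (\<epsilon>0 * real s)
     + (\<nu>g\<^sup>2 / \<epsilon>0 - beta0 \<nu>g \<kappa>g R CARD('p)) * \<sigma> + (beta0 \<nu>g \<kappa>g R CARD('p) + \<epsilon>0 / 2) * \<sigma> * real s"

lemma drift_threshold_nonneg:
  assumes "0 < s"
  shows "0 \<le> drift_threshold s"
proof -
  have "0 \<le> drift_threshold s - real s * \<sigma> * \<epsilon>0 / 2"
    using assms \<sigma>_pos \<epsilon>0_pos \<alpha>_pos parameters_nonneg beta0_pos
    by (intro drift_threshold_algebra(2)[where \<kappa>=\<kappa>f and R=R and \<alpha>=\<alpha> and \<nu>=\<nu>g and b="beta0 \<nu>g \<kappa>g R CARD('p)"])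
      (auto simp: drift_threshold_def)
  moreover have "0 \<le> real s * \<sigma> * \<epsilon>0 / 2" using \<sigma>_pos \<epsilon>0_pos by simp
  ultimately show ?thesis by linarith
qed

lemma expectation_mult_norm_drift:
  assumes y: "admissible y" and s: "0 < s" and above: "drift_threshold s \<le> norm (snd y)"
  shows "expectation (mult_norm y m s) \<le> norm (snd y) - real s * \<sigma> * \<epsilon>0 / 2"
proof -
  let ?Z0 = "norm (snd y)" and ?S = "real s" and ?b = "beta0 \<nu>g \<kappa>g R CARD('p)"
  have "(\<Sum>l<s. ?Z0 - real l * (\<sigma> * ?b)) = ?S * ?Z0 - (\<Sum>l<s. real l) * (\<sigma> * ?b)"
    by (simp add: sum_subtractf sum_distrib_right)
  also have "(\<Sum>l<s. real l) = ?S * (?S - 1) / 2"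
    by (induction s) (auto simp: field_simps)
  finally have sum_eq: "(\<Sum>l<s. ?Z0 - real l * (\<sigma> * ?b)) = ?S * ?Z0 - \<sigma> * ?b * (?S * (?S - 1) / 2)"
    by (simp add: algebra_simps)
  note algebra = drift_threshold_algebra[of ?S \<sigma> \<epsilon>0 \<alpha> R \<kappa>f ?b \<nu>g ?Z0]
  have bounds: "1 \<le> ?S" "0 \<le> ?b" "2 * \<kappa>f * R / \<epsilon>0 + R\<^sup>2 * \<alpha> / (\<epsilon>0 * ?S) + (\<nu>g\<^sup>2 / \<epsilon>0 - ?b) * \<sigma>
      + (?b + \<epsilon>0 / 2) * \<sigma> * ?S \<le> ?Z0"
    using s beta0_pos above by (auto simp: drift_threshold_def)
  have "(expectation (mult_norm y m s))\<^sup>2 \<le> expectation (\<lambda>\<omega>. (mult_norm y m s \<omega>)\<^sup>2)"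
    using variance_eq[OF integrable_mult_norm[OF y] integrable_mult_norm_sq[OF y]] variance_positive
    by (metis diff_ge_0_iff_ge)
  also have "\<dots> \<le> expectation (\<lambda>\<omega>. lyapunov (state_at y m s \<omega>))"
    using integrable_mult_norm_sq[OF y] integrable_lyapunov[OF y] admissible_run_chain[OF y]
    by (intro integral_mono) (auto simp: mult_norm_def state_at_def intro: lyapunov_bounds(1))
  also have "\<dots> \<le> lyapunov y - 2 * \<sigma> * \<epsilon>0 * (\<Sum>l<s. ?Z0 - real l * (\<sigma> * ?b))
      + ?S * (\<sigma>\<^sup>2 * \<nu>g\<^sup>2 + 2 * \<sigma> * \<kappa>f * R)"
    by (rule expectation_lyapunov_le[OF y])
  also have "\<dots> \<le> ?Z0\<^sup>2 + \<alpha> * \<sigma> * R\<^sup>2 - 2 * \<sigma> * \<epsilon>0 * (?S * ?Z0 - \<sigma> * ?b * (?S * (?S - 1) / 2))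
      + ?S * (\<sigma>\<^sup>2 * \<nu>g\<^sup>2 + 2 * \<sigma> * \<kappa>f * R)"
    using lyapunov_bounds(2)[OF y] unfolding sum_eq by linarith
  also have "\<dots> \<le> (?Z0 - ?S * \<sigma> * \<epsilon>0 / 2)\<^sup>2"
    using algebra(1) bounds \<sigma>_pos \<epsilon>0_pos \<alpha>_pos parameters_nonneg by blast
  finally show ?thesis
    using power2_le_imp_le algebra(2) bounds \<sigma>_pos \<epsilon>0_pos \<alpha>_pos parameters_nonneg by fastforce
qed

text \<open>The rate is chosen so that over \<open>s\<close> steps the exponent moves by at most
  \<open>\<epsilon>0 / (8 \<beta>\<^sub>0) \<le> 1\<close>, where \<open>exp x \<le> 1 + x + x\<^sup>2\<close>.\<close>

definition exp_rate :: "nat \<Rightarrow> real" where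
  "exp_rate s = \<epsilon>0 / (8 * real s * \<sigma> * (beta0 \<nu>g \<kappa>g R CARD('p))\<^sup>2)"

definition contraction :: real where
  "contraction = 1 - \<epsilon>0\<^sup>2 / (32 * (beta0 \<nu>g \<kappa>g R CARD('p))\<^sup>2)"

lemma contraction_bounds: "0 \<le> contraction" "contraction < 1"
proof -
  have "\<epsilon>0\<^sup>2 \<le> (beta0 \<nu>g \<kappa>g R CARD('p))\<^sup>2"
    using \<epsilon>0_le_beta0 \<epsilon>0_pos by (intro power_mono) auto
  then have "\<epsilon>0\<^sup>2 \<le> 32 * (beta0 \<nu>g \<kappa>g R CARD('p))\<^sup>2"
    using zero_le_power2[of "beta0 \<nu>g \<kappa>g R CARD('p)"] by linarith
  then show "0 \<le> contraction" using beta0_pos by (simp add: contraction_def field_simps)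
  show "contraction < 1" using \<epsilon>0_pos beta0_pos by (simp add: contraction_def)
qed

lemma exp_rate:
  assumes "0 < s"
  shows exp_rate_pos: "0 < exp_rate s"
    and exp_rate_increment: "exp_rate s * (real s * (\<sigma> * beta0 \<nu>g \<kappa>g R CARD('p))) = \<epsilon>0 / (8 * beta0 \<nu>g \<kappa>g R CARD('p))"
    and exp_rate_drift: "exp_rate s * (real s * \<sigma> * \<epsilon>0 / 2) = \<epsilon>0\<^sup>2 / (16 * (beta0 \<nu>g \<kappa>g R CARD('p))\<^sup>2)"
  using assms \<epsilon>0_pos \<sigma>_pos beta0_pos by (simp_all add: exp_rate_def field_simps power2_eq_square)

lemma exp_moment_step_above:
  assumes y: "admissible y" and s: "0 < s" and above: "drift_threshold s \<le> norm (snd y)"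
  shows "(\<integral>\<^sup>+\<omega>. ennreal (exp (exp_rate s * mult_norm y m s \<omega>)) \<partial>M)
           \<le> ennreal (contraction * exp (exp_rate s * norm (snd y)))"
proof -
  let ?Z0 = "norm (snd y)" and ?r = "exp_rate s" and ?b = "beta0 \<nu>g \<kappa>g R CARD('p)"
  let ?d = "\<epsilon>0 / (8 * ?b)"
  have "AE \<omega> in M. \<bar>?r * (mult_norm y m s \<omega> - ?Z0)\<bar> \<le> ?d"
    using AE_mult_norm_near[OF y, of m]
  proof eventually_elim
    case (elim \<omega>)
    then have "\<bar>?r * (mult_norm y m s \<omega> - ?Z0)\<bar> \<le> ?r * (real s * (\<sigma> * ?b))"
      using exp_rate_pos[OF s] by (simp add: abs_mult)
    then show ?case by (simp add: exp_rate_increment[OF s])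
  qed
  moreover have "?d \<le> 1" using \<epsilon>0_le_beta0 \<epsilon>0_pos beta0_pos by (simp add: field_simps)
  ultimately have "(\<integral>\<^sup>+\<omega>. ennreal (exp (?r * mult_norm y m s \<omega>)) \<partial>M)
      \<le> ennreal (exp (?r * ?Z0) * (1 + ?r * (expectation (mult_norm y m s) - ?Z0) + ?d\<^sup>2))"
    by (intro nn_integral_exp_le_quadratic integrable_mult_norm[OF y])
  also have "\<dots> \<le> ennreal (contraction * exp (?r * ?Z0))"
  proof (intro ennreal_leI)
    have "?r * (expectation (mult_norm y m s) - ?Z0) \<le> ?r * (- (real s * \<sigma> * \<epsilon>0 / 2))"
      using expectation_mult_norm_drift[OF y s above, of m] exp_rate_pos[OF s] by (intro mult_left_mono) auto
    then have "1 + ?r * (expectation (mult_norm y m s) - ?Z0) + ?d\<^sup>2 \<le> 1 - \<epsilon>0\<^sup>2 / (16 * ?b\<^sup>2) + ?d\<^sup>2"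
      using exp_rate_drift[OF s] by simp
    also have "\<dots> \<le> contraction"
      using beta0_pos \<epsilon>0_pos by (simp add: contraction_def field_simps power2_eq_square)
    finally show "exp (?r * ?Z0) * (1 + ?r * (expectation (mult_norm y m s) - ?Z0) + ?d\<^sup>2)
        \<le> contraction * exp (?r * ?Z0)"
      by (simp add: mult.commute)
  qed
  finally show ?thesis .
qed

definition exp_moment_const :: "nat \<Rightarrow> real" where
  "exp_moment_const s = exp (exp_rate s * (drift_threshold s + real s * (\<sigma> * beta0 \<nu>g \<kappa>g R CARD('p))))"

lemma exp_moment_step_below:
  assumes y: "admissible y" and s: "0 < s" and below: "norm (snd y) < drift_threshold s"
  shows "(\<integral>\<^sup>+\<omega>. ennreal (exp (exp_rate s * mult_norm y m s \<omega>)) \<partial>M)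
           \<le> ennreal (exp_moment_const s)"
proof -
  let ?c = "exp_moment_const s"
  have "AE \<omega> in M. ennreal (exp (exp_rate s * mult_norm y m s \<omega>)) \<le> ennreal ?c"
    using AE_mult_norm_le[OF y, of m s]
  proof eventually_elim
    case (elim \<omega>)
    then have "exp_rate s * mult_norm y m s \<omega>
        \<le> exp_rate s * (drift_threshold s + real s * (\<sigma> * beta0 \<nu>g \<kappa>g R CARD('p)))"
      using below exp_rate_pos[OF s] by (intro mult_left_mono) auto
    then show ?case by (intro ennreal_leI) (simp add: exp_moment_const_def)
  qed
  then have "(\<integral>\<^sup>+\<omega>. ennreal (exp (exp_rate s * mult_norm y m s \<omega>)) \<partial>M) \<le> (\<integral>\<^sup>+\<omega>. ennreal ?c \<partial>M)"
    by (rule nn_integral_mono_AE)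
  then show ?thesis by (simp add: emeasure_space_1)
qed

lemma exp_moment_step:
  assumes y: "admissible y" and s: "0 < s"
  shows "(\<integral>\<^sup>+\<omega>. ennreal (exp (exp_rate s * mult_norm y m s \<omega>)) \<partial>M)
    \<le> ennreal (contraction * exp (exp_rate s * norm (snd y)) + exp_moment_const s)"
proof (cases "drift_threshold s \<le> norm (snd y)")
  case True
  have "ennreal (contraction * exp (exp_rate s * norm (snd y)))
      \<le> ennreal (contraction * exp (exp_rate s * norm (snd y)) + exp_moment_const s)"
    by (intro ennreal_leI) (simp add: exp_moment_const_def)
  with exp_moment_step_above[OF y s True, of m] show ?thesis by (rule order_trans)
next
  case False
  have "0 \<le> contraction * exp (exp_rate s * norm (snd y))" using contraction_bounds by simp
  with exp_moment_step_below[OF y s, of m] False show ?thesis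
    by (auto simp: exp_moment_const_def intro: order_trans ennreal_leI)
qed

lemma exp_moment_recursion:
  assumes s: "0 < s"
  shows "(\<integral>\<^sup>+\<omega>. ennreal (exp (exp_rate s * mult_norm (x0, 0) 0 (j + s) \<omega>)) \<partial>M)
    \<le> ennreal contraction * (\<integral>\<^sup>+\<omega>. ennreal (exp (exp_rate s * mult_norm (x0, 0) 0 j \<omega>)) \<partial>M)
      + ennreal (exp_moment_const s)"
proof -
  let ?r = "exp_rate s" and ?c = "exp_moment_const s"
  define h where "h = (\<lambda>y::'n \<times> (real^'p). ennreal (exp (?r * norm (snd y))))"
  define B where "B = (\<lambda>y::'n \<times> (real^'p). ennreal (contraction * exp (?r * norm (snd y)) + ?c))"
  have h_run: "h (run_chain slpmm_step y m j (\<lambda>i. Xi i \<omega>)) = ennreal (exp (?r * mult_norm y m j \<omega>))" for y m j \<omega>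
    by (simp add: h_def mult_norm_def state_at_def)
  have [measurable]: "h \<in> borel_measurable borel" "B \<in> borel_measurable borel"
    unfolding h_def B_def by (intro measurable_compose[OF _ measurable_ennreal]
        borel_measurable_continuous_onI continuous_intros)+
  have meas: "(\<lambda>\<omega>. ennreal (exp (?r * mult_norm (x0, 0) 0 j \<omega>))) \<in> borel_measurable M"
    unfolding mult_norm_def
    by (intro measurable_compose[OF _ measurable_ennreal] borel_measurable_state_at_comp continuous_intros)
  have "(\<integral>\<^sup>+\<omega>. ennreal (exp (?r * mult_norm (x0, 0) 0 (j + s) \<omega>)) \<partial>M)
      \<le> (\<integral>\<^sup>+\<omega>. B (run_chain slpmm_step (x0, 0) 0 j (\<lambda>i. Xi i \<omega>)) \<partial>M)"
    unfolding h_run[symmetric]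
  proof (rule nn_integral_run_chain_split[OF Xi_indep measurable_slpmm_step])
    have "admissible (x0, 0)" using x0_in_C by (simp add: admissible_def)
    then show "(\<integral>\<^sup>+\<omega>. h (run_chain slpmm_step (run_chain slpmm_step (x0, 0) 0 j u) j s (\<lambda>i. Xi i \<omega>)) \<partial>M)
        \<le> B (run_chain slpmm_step (x0, 0) 0 j u)" for u
      unfolding h_run B_def by (intro exp_moment_step admissible_run_chain s)
  qed measurable
  also have "\<dots> = (\<integral>\<^sup>+\<omega>. ennreal contraction * ennreal (exp (?r * mult_norm (x0, 0) 0 j \<omega>)) + ennreal ?c \<partial>M)"
    using contraction_bounds exp_moment_const_def
    by (intro nn_integral_cong) (simp add: B_def mult_norm_def state_at_def ennreal_plus ennreal_mult)
  also have "\<dots> = ennreal contraction * (\<integral>\<^sup>+\<omega>. ennreal (exp (?r * mult_norm (x0, 0) 0 j \<omega>)) \<partial>M)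
      + ennreal ?c"
    using meas by (simp add: nn_integral_add nn_integral_cmult[OF meas] emeasure_space_1)
  finally show ?thesis .
qed

lemma exp_moment_initial:
  assumes s: "0 < s" and "j < s"
  shows "(\<integral>\<^sup>+\<omega>. ennreal (exp (exp_rate s * mult_norm (x0, 0) 0 j \<omega>)) \<partial>M) \<le> ennreal (exp_moment_const s)"
proof -
  let ?\<delta> = "\<sigma> * beta0 \<nu>g \<kappa>g R CARD('p)"
  have x0: "admissible (x0, 0)" using x0_in_C by (simp add: admissible_def)
  have "AE \<omega> in M. ennreal (exp (exp_rate s * mult_norm (x0, 0) 0 j \<omega>)) \<le> ennreal (exp_moment_const s)"
    using AE_mult_norm_le[OF x0, of 0 j]
  proof eventually_elim
    case (elim \<omega>)
    have "real j * ?\<delta> \<le> real s * ?\<delta>"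
      using \<open>j < s\<close> \<sigma>_pos beta0_pos by (intro mult_right_mono) auto
    then have "exp_rate s * mult_norm (x0, 0) 0 j \<omega> \<le> exp_rate s * (drift_threshold s + real s * ?\<delta>)"
      using elim exp_rate_pos[OF s] drift_threshold_nonneg[OF s] by (intro mult_left_mono) auto
    then show ?case by (intro ennreal_leI) (simp add: exp_moment_const_def)
  qed
  then have "(\<integral>\<^sup>+\<omega>. ennreal (exp (exp_rate s * mult_norm (x0, 0) 0 j \<omega>)) \<partial>M)
      \<le> (\<integral>\<^sup>+\<omega>. ennreal (exp_moment_const s) \<partial>M)"
    by (rule nn_integral_mono_AE)
  then show ?thesis by (simp add: emeasure_space_1)
qed

text \<open>The fixed point of \<open>K \<mapsto> contraction * K + exp_moment_const s\<close>, the \<open>s\<close>-step recursion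
  satisfied by the exponential moments.\<close>

definition exp_moment_bound :: "nat \<Rightarrow> real" where
  "exp_moment_bound s = exp_moment_const s / (1 - contraction)"

lemma nn_integral_exp_mult_norm_le:
  assumes s: "0 < s"
  shows "(\<integral>\<^sup>+\<omega>. ennreal (exp (exp_rate s * mult_norm (x0, 0) 0 k \<omega>)) \<partial>M) \<le> ennreal (exp_moment_bound s)"
proof (rule shifted_recurrence_bound[OF s])
  have contr: "0 \<le> contraction" "0 < 1 - contraction" and const: "0 \<le> exp_moment_const s"
    using contraction_bounds by (auto simp: exp_moment_const_def)
  then have bound: "exp_moment_const s \<le> exp_moment_bound s" "0 \<le> exp_moment_bound s"
    and fixpoint: "contraction * exp_moment_bound s + exp_moment_const s = exp_moment_bound s"
    by (simp_all add: exp_moment_bound_def field_simps)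
  show "(\<integral>\<^sup>+\<omega>. ennreal (exp (exp_rate s * mult_norm (x0, 0) 0 (j + s) \<omega>)) \<partial>M)
      \<le> ennreal contraction * (\<integral>\<^sup>+\<omega>. ennreal (exp (exp_rate s * mult_norm (x0, 0) 0 j \<omega>)) \<partial>M)
        + ennreal (exp_moment_const s)" for j
    by (rule exp_moment_recursion[OF s])
  show "(\<integral>\<^sup>+\<omega>. ennreal (exp (exp_rate s * mult_norm (x0, 0) 0 j \<omega>)) \<partial>M) \<le> ennreal (exp_moment_bound s)"
    if "j < s" for j
    using exp_moment_initial[OF s that] ennreal_leI[OF bound(1)] by (rule order_trans)
  show "ennreal contraction * ennreal (exp_moment_bound s) + ennreal (exp_moment_const s)
      \<le> ennreal (exp_moment_bound s)"
    using fixpoint contr const bound by (simp add: ennreal_mult[symmetric] ennreal_plus[symmetric])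
qed simp

lemma mult_norm_mean_tail:
  assumes s: "0 < s"
  shows "expectation (mult_norm (x0, 0) 0 k) \<le> ln (exp_moment_bound s) / exp_rate s"
    and "0 < \<mu> \<Longrightarrow> prob {\<omega> \<in> space M. (ln (exp_moment_bound s) + ln (1 / \<mu>)) / exp_rate s
                                      \<le> mult_norm (x0, 0) 0 k \<omega>} \<le> \<mu>"
proof -
  let ?r = "exp_rate s" and ?Z = "mult_norm (x0, 0) 0 k"
  have x0: "admissible (x0, 0)" using x0_in_C by (simp add: admissible_def)
  have exp_int: "integrable M (\<lambda>\<omega>. exp (?r * ?Z \<omega>))"
  proof (rule integrable_const_bound[where B="exp (?r * (real k * (\<sigma> * beta0 \<nu>g \<kappa>g R CARD('p))))"])
    show "AE \<omega> in M. norm (exp (?r * ?Z \<omega>)) \<le> exp (?r * (real k * (\<sigma> * beta0 \<nu>g \<kappa>g R CARD('p))))"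
      using AE_mult_norm_le[OF x0, of 0 k]
    proof eventually_elim
      case (elim \<omega>)
      then have "?r * ?Z \<omega> \<le> ?r * (real k * (\<sigma> * beta0 \<nu>g \<kappa>g R CARD('p)))"
        using exp_rate_pos[OF s] by (intro mult_left_mono) auto
      then show ?case by simp
    qed
    show "(\<lambda>\<omega>. exp (?r * ?Z \<omega>)) \<in> borel_measurable M"
      unfolding mult_norm_def by (intro borel_measurable_state_at_comp continuous_intros)
  qed
  have "ennreal (expectation (\<lambda>\<omega>. exp (?r * ?Z \<omega>))) \<le> ennreal (exp_moment_bound s)"
    using nn_integral_exp_mult_norm_le[OF s, of k] by (simp add: nn_integral_eq_integral[OF exp_int])
  then have "expectation (\<lambda>\<omega>. exp (?r * ?Z \<omega>)) \<le> exp_moment_bound s"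
    using contraction_bounds by (simp add: exp_moment_bound_def exp_moment_const_def ennreal_le_iff)
  note bounds = exp_moment_mean_tail[OF integrable_mult_norm[OF x0] exp_int exp_rate_pos[OF s] this]
  show "expectation ?Z \<le> ln (exp_moment_bound s) / ?r" by (rule bounds(1))
  show "0 < \<mu> \<Longrightarrow> prob {\<omega> \<in> space M. (ln (exp_moment_bound s) + ln (1 / \<mu>)) / ?r \<le> ?Z \<omega>} \<le> \<mu>"
    by (rule bounds(2))
qed

lemma psi_phi_bd_eq:
  assumes s: "0 < s"
  shows "psi_bd \<nu>g \<kappa>f \<kappa>g R \<epsilon>0 CARD('p) \<sigma> \<alpha> (real s) = ln (exp_moment_bound s) / exp_rate s"
    and "phi_bd \<nu>g \<kappa>f \<kappa>g R \<epsilon>0 CARD('p) \<sigma> \<alpha> (real s) \<mu>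
           = (ln (exp_moment_bound s) + ln (1 / \<mu>)) / exp_rate s"
proof -
  let ?b = "beta0 \<nu>g \<kappa>g R CARD('p)"
  define L where "L = ln (32 * ?b\<^sup>2 / \<epsilon>0\<^sup>2)"
  have inv_rate: "1 / exp_rate s = 8 * real s * \<sigma> * ?b\<^sup>2 / \<epsilon>0"
    using \<epsilon>0_pos by (simp add: exp_rate_def)
  have "1 / (1 - contraction) = 32 * ?b\<^sup>2 / \<epsilon>0\<^sup>2"
    using \<epsilon>0_pos beta0_pos by (simp add: contraction_def field_simps)
  moreover have "ln (exp_moment_bound s)
      = exp_rate s * (drift_threshold s + real s * (\<sigma> * ?b)) + ln (1 / (1 - contraction))"
    using contraction_bounds by (simp add: exp_moment_bound_def exp_moment_const_def ln_div)
  ultimately have "ln (exp_moment_bound s) / exp_rate s = drift_threshold s + real s * (\<sigma> * ?b) + L * (1 / exp_rate s)"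
    using exp_rate_pos[OF s] by (simp add: L_def add_divide_distrib)
  also have "\<dots> = psi_bd \<nu>g \<kappa>f \<kappa>g R \<epsilon>0 CARD('p) \<sigma> \<alpha> (real s)"
    unfolding inv_rate psi_bd_def Let_def L_def[symmetric] drift_threshold_def
    using s \<epsilon>0_pos by (simp add: field_simps power2_eq_square)
  finally show psi: "psi_bd \<nu>g \<kappa>f \<kappa>g R \<epsilon>0 CARD('p) \<sigma> \<alpha> (real s) = ln (exp_moment_bound s) / exp_rate s" ..
  have "ln (1 / \<mu>) / exp_rate s = ln (1 / \<mu>) * (1 / exp_rate s)" by simp
  also have "\<dots> = (8 * ?b\<^sup>2 / \<epsilon>0) * ln (1 / \<mu>) * \<sigma> * real s"
    unfolding inv_rate by (simp add: mult_ac)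
  finally show "phi_bd \<nu>g \<kappa>f \<kappa>g R \<epsilon>0 CARD('p) \<sigma> \<alpha> (real s) \<mu>
      = (ln (exp_moment_bound s) + ln (1 / \<mu>)) / exp_rate s"
    by (simp add: phi_bd_def psi add_divide_distrib)
qed

end

theorem lemma6:
  fixes M :: "'w measure"
    and Xi :: "nat \<Rightarrow> 'w \<Rightarrow> 'q::euclidean_space"
    and Xset :: "'q set"
    and C :: "'n::euclidean_space set"
    and F :: "'n \<Rightarrow> 'q \<Rightarrow> real"
    and G :: "'n \<Rightarrow> 'q \<Rightarrow> real^'p"
    and v0 :: "'n \<Rightarrow> 'q \<Rightarrow> 'n"
    and v :: "'p \<Rightarrow> 'n \<Rightarrow> 'q \<Rightarrow> 'n"
    and R \<nu>g \<kappa>f \<kappa>g \<epsilon>0 \<sigma> \<alpha> :: real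
    and x0 xhat :: 'n
    and s :: nat
  assumes P: "prob_space M"
    and Xi_rv: "\<And>k. Xi k \<in> borel_measurable M"
    and Xi_indep: "prob_space.indep_vars M (\<lambda>_. borel) Xi UNIV"
    and Xi_ident: "\<And>k. distr M borel (Xi k) = distr M borel (Xi 0)"
    and Xi_supp: "\<And>k. AE \<omega> in M. Xi k \<omega> \<in> Xset"
    and C_cpt: "compact C" and C_cvx: "convex C" and C_ne: "C \<noteq> {}"
    and F_cvx: "\<And>z. z \<in> Xset \<Longrightarrow> convex_on C (\<lambda>x. F x z) \<and> continuous_on C (\<lambda>x. F x z)"
    and G_cvx: "\<And>z i. z \<in> Xset \<Longrightarrow> convex_on C (\<lambda>x. G x z $ i) \<and> continuous_on C (\<lambda>x. G x z $ i)"
    and F_meas: "(\<lambda>y. F (fst y) (snd y)) \<in> borel_measurable borel"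
    and G_meas: "(\<lambda>y. G (fst y) (snd y)) \<in> borel_measurable borel"
    and v0_meas: "(\<lambda>y. v0 (fst y) (snd y)) \<in> borel_measurable borel"
    and v_meas: "\<And>i. (\<lambda>y. v i (fst y) (snd y)) \<in> borel_measurable borel"
    and f_fin: "\<And>x. x \<in> C \<Longrightarrow> integrable M (\<lambda>\<omega>. F x (Xi 0 \<omega>))"
    and g_fin: "\<And>x i. x \<in> C \<Longrightarrow> integrable M (\<lambda>\<omega>. G x (Xi 0 \<omega>) $ i)"
    and v0_sub: "\<And>x z. x \<in> C \<Longrightarrow> z \<in> Xset \<Longrightarrow> subgrad_on C (\<lambda>y. F y z) x (v0 x z)"
    and v_sub: "\<And>x z i. x \<in> C \<Longrightarrow> z \<in> Xset \<Longrightarrow> subgrad_on C (\<lambda>y. G y z $ i) x (v i x z)"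
    and A1: "\<And>x' x''. x' \<in> C \<Longrightarrow> x'' \<in> C \<Longrightarrow> norm (x' - x'') \<le> R"
    and A2: "\<And>x z. x \<in> C \<Longrightarrow> z \<in> Xset \<Longrightarrow> norm (G x z) \<le> \<nu>g"
    and A3: "\<And>x z i. x \<in> C \<Longrightarrow> z \<in> Xset \<Longrightarrow> norm (v0 x z) \<le> \<kappa>f \<and> norm (v i x z) \<le> \<kappa>g"
    and A4: "\<epsilon>0 > 0" "xhat \<in> C" "\<And>i. prob_space.expectation M (\<lambda>\<omega>. G xhat (Xi 0 \<omega>) $ i) \<le> - \<epsilon>0"
    and \<sigma>_pos: "\<sigma> > 0" and \<alpha>_pos: "\<alpha> > 0"
    and x0_C: "x0 \<in> C"
    and s_pos: "s > 0"
  shows "\<forall>k. prob_space.expectation M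
               (\<lambda>\<omega>. norm (snd (slpmm C F G v0 v \<sigma> \<alpha> x0 (\<lambda>j. Xi j \<omega>) k)))
             \<le> psi_bd \<nu>g \<kappa>f \<kappa>g R \<epsilon>0 CARD('p) \<sigma> \<alpha> (real s)
         \<and> (\<forall>\<mu>. 0 < \<mu> \<and> \<mu> < 1 \<longrightarrow>
              measure M {\<omega> \<in> space M.
                 norm (snd (slpmm C F G v0 v \<sigma> \<alpha> x0 (\<lambda>j. Xi j \<omega>) k))
                   \<ge> phi_bd \<nu>g \<kappa>f \<kappa>g R \<epsilon>0 CARD('p) \<sigma> \<alpha> (real s) \<mu>} \<le> \<mu>)"
proof -
  interpret slpmm_process C \<sigma> \<alpha> F G v0 v Xset R \<nu>g \<kappa>f \<kappa>g xhat M Xi x0 \<epsilon>0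
    using P by (intro slpmm_process.intro slpmm_data.intro slpmm_process_axioms.intro) (use assms in auto)
  have "norm (snd (slpmm C F G v0 v \<sigma> \<alpha> x0 (\<lambda>j. Xi j \<omega>) k)) = mult_norm (x0, 0) 0 k \<omega>" for k \<omega>
    by (simp add: mult_norm_def state_at_def slpmm_eq_run_chain)
  then show ?thesis
    using mult_norm_mean_tail[OF s_pos] unfolding psi_phi_bd_eq[OF s_pos] by auto
qed

end
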